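(* Let $C$ be a bialgebra over a commutative ring $\Bbbk$, with product $\mu$, unit $1_C$, coproduct $\Delta$ (iterated coproduct written $\Delta^{n-1}(c)=c^{(1)}\otimes\dots\otimes c^{(n)}$) and counit $\varepsilon$. Let $\mathcal{O}_C$ be the operad with multiplication with $\mathcal{O}_C(n)=C^{\otimes n}$, identity $1_C\in\mathcal{O}_C(1)$, partial compositions $$(a_1\otimes\dots\otimes a_m)\circ_i(b_1\otimes\dots\otimes b_n)=a_1\otimes\dots\otimes a_{i-1}\otimes a_i^{(1)}b_1\otimes\dots\otimes a_i^{(n)}b_n\otimes a_{i+1}\otimes\dots\otimes a_m,$$ multiplication $1_C\otimes 1_C\in\mathcal{O}_C(2)$ and $e=1\in\Bbbk=\mathcal{O}_C(0)$; its cochain complex is the cobar construction $\Omega C$ and its cohomology is $\mathrm{Cotor}^*_C(\Bbbk,\Bbbk)$, which thus carries a Gerstenhaber algebra structure. Let $\mathcal{C}o\mathcal{E}nd(C)$ be the operad with multiplication $\mathcal{C}o\mathcal{E}nd(C)(n)=\mathrm{Hom}_\Bbbk(C,C^{\otimes n})$, $\gamma(f;g_1,\dots,g_n)=(g_1\otimes\dots\otimes g_n)\circ f$, identity $\mathrm{id}_C$, multiplication $\Delta$ and $e=\varepsilon$; its cochain complex is the Hochschild cochain complex $\mathcal{C}^*_{coalg}(C,C)$ of the coalgebra $C$, whose cohomology $HH^*_{coalg}(C,C)$ is thus a Gerstenhaber algebra. Then the linear maps $ext:C^{\otimes n}\to\mathrm{Hom}_\Bbbk(C,C^{\otimes n})$,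 $ext(c_1\otimes\dots\otimes c_n)(c)=c^{(1)}c_1\otimes\dots\otimes c^{(n)}c_n$, induce an injective morphism of Gerstenhaber algebras $\mathrm{Cotor}^*_C(\Bbbk,\Bbbk)\hookrightarrow HH^*_{coalg}(C,C)$; i.e. $\mathrm{Cotor}^*_C(\Bbbk,\Bbbk)$ is a sub Gerstenhaber algebra of $HH^*_{coalg}(C,C)$.
   Context: A (non-symmetric, $\Bbbk$-linear) operad $O$ consists of $\Bbbk$-modules $O(n)$, $n\ge 0$, an identity $id\in O(1)$ and associative unital structure maps, equivalently partial compositions $\circ_i:O(m)\otimes O(n)\to O(m+n-1)$, $1\le i\le m$. An operad with multiplication is an operad with $\mu\in O(2)$, $e\in O(0)$ such that $\mu\circ_1\mu=\mu\circ_2\mu$ and $\mu\circ_1e=id=\mu\circ_2 e$. Its cochain complex $\mathcal{C}^*(O)$ has $O(n)$ in degree $n$ and differential $df=\mu\circ_2 f+\sum_{i=1}^n(-1)^if\circ_i\mu+(-1)^{n+1}\mu\circ_1 f$. The cup product $f\cup g=(\mu\circ_1 f)\circ_{m+1}g$ for $f\in O(m)$, $g\in O(n)$, and the bracket $\{f,g\}=f\bar\circ g-(-1)^{(m-1)(n-1)}g\bar\circ f$ with $f\bar\circ g=(-1)^{(m-1)(n-1)}\sum_{i=1}^m(-1)^{(n-1)(i-1)}f\circ_i g$, induce on the cohomology $H(\mathcal{C}^*(O))$ a Gerstenhaber algebra structure (graded commutative product plus degree $-1$ Lie bracket satisfying the Poisson rule). Morphisms of operads with multiplication induce morphisms of Gerstenhaber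 algebras. *)

theory Defs
  imports Main "HOL.Modules"
begin

text \<open>An element of the free k-module on the set of finite words over C is
represented by a finitely supported function from words to k.  The tensor
power of C of degree n is the set of such functions supported on words of
length n, modulo the submodule of multilinearity relations (mlrel).
Elements of tensor powers are therefore handled through representatives,
and equality in the tensor power is the relation teq.\<close>

type_synonym ('c, 'k) fm = "'c list \<Rightarrow> 'k"

definition fsupp :: "('c, 'k::zero) fm \<Rightarrow> 'c list set" where
  "fsupp f = {xs. f xs \<noteq> 0}"

definition hom_deg :: "nat \<Rightarrow> ('c, 'k::zero) fm \<Rightarrow> bool" where
  "hom_deg n f \<longleftrightarrow> finite (fsupp f) \<and> (\<forall>xs. f xs \<noteq> 0 \<longrightarrow> length xs = n)"

definition fzero :: "('c, 'k::zero) fm" where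
  "fzero = (\<lambda>_. 0)"

definition fadd :: "('c, 'k::plus) fm \<Rightarrow> ('c, 'k) fm \<Rightarrow> ('c, 'k) fm" where
  "fadd f g = (\<lambda>xs. f xs + g xs)"

definition fsmult :: "'k::times \<Rightarrow> ('c, 'k) fm \<Rightarrow> ('c, 'k) fm" where
  "fsmult a f = (\<lambda>xs. a * f xs)"

definition fsub :: "('c, 'k::minus) fm \<Rightarrow> ('c, 'k) fm \<Rightarrow> ('c, 'k) fm" where
  "fsub f g = (\<lambda>xs. f xs - g xs)"

text \<open>The basis element given by a word, i.e. the elementary tensor
c1 \<otimes> ... \<otimes> cn for the word [c1,...,cn].\<close>
definition basis :: "'c list \<Rightarrow> ('c, 'k::{zero,one}) fm" where
  "basis xs = (\<lambda>ys. if ys = xs then 1 else 0)"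

text \<open>Tensor (concatenation) product of representatives.\<close>
definition fmul :: "('c, 'k::comm_ring_1) fm \<Rightarrow> ('c, 'k) fm \<Rightarrow> ('c, 'k) fm" where
  "fmul f g = (\<lambda>xs. \<Sum>i\<in>{..length xs}. f (take i xs) * g (drop i xs))"

text \<open>Linear extension: the image of f under the linear map sending
the basis word xs to Psi xs.\<close>
definition flin :: "('c, 'k::comm_ring_1) fm \<Rightarrow> ('c list \<Rightarrow> ('d, 'k) fm) \<Rightarrow> ('d, 'k) fm" where
  "flin f Psi = (\<lambda>ys. \<Sum>xs\<in>fsupp f. f xs * Psi xs ys)"

text \<open>Componentwise product (a1 \<otimes>..\<otimes> an)(b1 \<otimes>..\<otimes> bn) = a1 b1 \<otimes>..\<otimes> an bn,
extended bilinearly (used on arguments of equal degree).\<close>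
definition fzip :: "('c \<Rightarrow> 'c \<Rightarrow> 'c) \<Rightarrow> ('c, 'k::comm_ring_1) fm \<Rightarrow> ('c, 'k) fm \<Rightarrow> ('c, 'k) fm" where
  "fzip mult f g = flin f (\<lambda>xs. flin g (\<lambda>ys. basis (map2 mult xs ys)))"

text \<open>The submodule of multilinearity relations (it is automatically a
two-sided ideal for the concatenation product, and homogeneous).\<close>
inductive_set mlrel :: "('k::comm_ring_1 \<Rightarrow> 'c::ab_group_add \<Rightarrow> 'c) \<Rightarrow> ('c, 'k) fm set"
  for scale :: "'k::comm_ring_1 \<Rightarrow> 'c::ab_group_add \<Rightarrow> 'c" where
  rel_add: "fsub (basis (xs @ (x + y) # ys)) (fadd (basis (xs @ x # ys)) (basis (xs @ y # ys))) \<in> mlrel scale"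
| rel_smult: "fsub (basis (xs @ scale a x # ys)) (fsmult a (basis (xs @ x # ys))) \<in> mlrel scale"
| rel_zero: "fzero \<in> mlrel scale"
| rel_plus: "f \<in> mlrel scale \<Longrightarrow> g \<in> mlrel scale \<Longrightarrow> fadd f g \<in> mlrel scale"
| rel_scale: "f \<in> mlrel scale \<Longrightarrow> fsmult a f \<in> mlrel scale"

definition teq :: "('k::comm_ring_1 \<Rightarrow> 'c::ab_group_add \<Rightarrow> 'c) \<Rightarrow> ('c, 'k) fm \<Rightarrow> ('c, 'k) fm \<Rightarrow> bool" where
  "teq scale f g \<longleftrightarrow> fsub f g \<in> mlrel scale"

definition bialgebra ::
  "('k::comm_ring_1 \<Rightarrow> 'c::ab_group_add \<Rightarrow> 'c) \<Rightarrow> ('c \<Rightarrow> 'c \<Rightarrow> 'c) \<Rightarrow> 'c \<Rightarrow>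
   ('c \<Rightarrow> ('c, 'k) fm) \<Rightarrow> ('c \<Rightarrow> 'k) \<Rightarrow> bool" where
  "bialgebra scale mult u Delta eps \<longleftrightarrow>
    module scale \<and>
    (\<forall>x y z. mult (x + y) z = mult x z + mult y z) \<and>
    (\<forall>x y z. mult x (y + z) = mult x y + mult x z) \<and>
    (\<forall>a x y. mult (scale a x) y = scale a (mult x y)) \<and>
    (\<forall>a x y. mult x (scale a y) = scale a (mult x y)) \<and>
    (\<forall>x y z. mult (mult x y) z = mult x (mult y z)) \<and>
    (\<forall>x. mult u x = x \<and> mult x u = x) \<and>
    (\<forall>c. hom_deg 2 (Delta c)) \<and>
    (\<forall>x y. teq scale (Delta (x + y)) (fadd (Delta x) (Delta y))) \<and>
    (\<forall>a x. teq scale (Delta (scale a x)) (fsmult a (Delta x))) \<and>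
    (\<forall>x y. eps (x + y) = eps x + eps y) \<and>
    (\<forall>a x. eps (scale a x) = a * eps x) \<and>
    (\<forall>c. teq scale (flin (Delta c) (\<lambda>xs. fmul (Delta (xs ! 0)) (basis [xs ! 1])))
                    (flin (Delta c) (\<lambda>xs. fmul (basis [xs ! 0]) (Delta (xs ! 1))))) \<and>
    (\<forall>c. teq scale (flin (Delta c) (\<lambda>xs. fsmult (eps (xs ! 0)) (basis [xs ! 1]))) (basis [c])) \<and>
    (\<forall>c. teq scale (flin (Delta c) (\<lambda>xs. fsmult (eps (xs ! 1)) (basis [xs ! 0]))) (basis [c])) \<and>
    (\<forall>x y. teq scale (Delta (mult x y)) (fzip mult (Delta x) (Delta y))) \<and>
    teq scale (Delta u) (basis [u, u]) \<and>
    (\<forall>x y. eps (mult x y) = eps x * eps y) \<and>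
    eps u = 1"

text \<open>Iterated coproduct Delta^(n-1) : C \<rightarrow> C^{\<otimes> n}; for n = 0 it is the counit.\<close>
fun iterD :: "('c \<Rightarrow> ('c, 'k::comm_ring_1) fm) \<Rightarrow> ('c \<Rightarrow> 'k) \<Rightarrow> nat \<Rightarrow> 'c \<Rightarrow> ('c, 'k) fm" where
  "iterD Delta eps 0 c = fsmult (eps c) (basis [])"
| "iterD Delta eps (Suc 0) c = basis [c]"
| "iterD Delta eps (Suc (Suc k)) c =
     flin (Delta c) (\<lambda>xs. fmul (basis [xs ! 0]) (iterD Delta eps (Suc k) (xs ! 1)))"

text \<open>An operad with multiplication presented through representatives of type 'o:
membership in arity n, the "is zero" predicate, module operations,
partial compositions (om_comp i f g = f \<circ>_i g), multiplication mu and e.\<close>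
record ('o, 'k) opm =
  om_mem :: "nat \<Rightarrow> 'o \<Rightarrow> bool"
  om_null :: "'o \<Rightarrow> bool"
  om_add :: "'o \<Rightarrow> 'o \<Rightarrow> 'o"
  om_smult :: "'k \<Rightarrow> 'o \<Rightarrow> 'o"
  om_zero :: "'o"
  om_comp :: "nat \<Rightarrow> 'o \<Rightarrow> 'o \<Rightarrow> 'o"
  om_mu :: "'o"
  om_e :: "'o"

definition osign :: "int \<Rightarrow> 'k::comm_ring_1" where
  "osign z = (if even z then 1 else - 1)"

definition osum :: "('o, 'k) opm \<Rightarrow> 'o list \<Rightarrow> 'o" where
  "osum Op xs = foldr (om_add Op) xs (om_zero Op)"

definition osub :: "('o, 'k::comm_ring_1) opm \<Rightarrow> 'o \<Rightarrow> 'o \<Rightarrow> 'o" where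
  "osub Op f g = om_add Op f (om_smult Op (- 1) g)"

definition cdiff :: "('o, 'k::comm_ring_1) opm \<Rightarrow> nat \<Rightarrow> 'o \<Rightarrow> 'o" where
  "cdiff Op n f =
     om_add Op (om_comp Op 2 (om_mu Op) f)
       (om_add Op (osum Op (map (\<lambda>i. om_smult Op (osign (int i)) (om_comp Op i f (om_mu Op))) [1..<n+1]))
          (om_smult Op (osign (int n + 1)) (om_comp Op 1 (om_mu Op) f)))"

definition cocycle :: "('o, 'k::comm_ring_1) opm \<Rightarrow> nat \<Rightarrow> 'o \<Rightarrow> bool" where
  "cocycle Op n f \<longleftrightarrow> om_mem Op n f \<and> om_null Op (cdiff Op n f)"

definition coboundary :: "('o, 'k::comm_ring_1) opm \<Rightarrow> nat \<Rightarrow> 'o \<Rightarrow> bool" where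
  "coboundary Op n f \<longleftrightarrow> om_mem Op n f \<and>
     (om_null Op f \<or> (n \<ge> 1 \<and> (\<exists>g. om_mem Op (n - 1) g \<and> om_null Op (osub Op f (cdiff Op (n - 1) g)))))"

definition cohom :: "('o, 'k::comm_ring_1) opm \<Rightarrow> nat \<Rightarrow> 'o \<Rightarrow> 'o \<Rightarrow> bool" where
  "cohom Op n f g \<longleftrightarrow> coboundary Op n (osub Op f g)"

definition cup :: "('o, 'k) opm \<Rightarrow> nat \<Rightarrow> 'o \<Rightarrow> 'o \<Rightarrow> 'o" where
  "cup Op m f g = om_comp Op (m + 1) (om_comp Op 1 (om_mu Op) f) g"

definition obar :: "('o, 'k::comm_ring_1) opm \<Rightarrow> nat \<Rightarrow> nat \<Rightarrow> 'o \<Rightarrow> 'o \<Rightarrow> 'o" where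
  "obar Op m n f g = om_smult Op (osign ((int m - 1) * (int n - 1)))
     (osum Op (map (\<lambda>i. om_smult Op (osign ((int n - 1) * (int i - 1))) (om_comp Op i f g)) [1..<m+1]))"

definition gbracket :: "('o, 'k::comm_ring_1) opm \<Rightarrow> nat \<Rightarrow> nat \<Rightarrow> 'o \<Rightarrow> 'o \<Rightarrow> 'o" where
  "gbracket Op m n f g = osub Op (obar Op m n f g)
     (om_smult Op (osign ((int m - 1) * (int n - 1))) (obar Op n m g f))"

definition ocomp :: "('c \<Rightarrow> 'c \<Rightarrow> 'c) \<Rightarrow> ('c \<Rightarrow> ('c, 'k::comm_ring_1) fm) \<Rightarrow> ('c \<Rightarrow> 'k) \<Rightarrow>
    nat \<Rightarrow> ('c, 'k) fm \<Rightarrow> ('c, 'k) fm \<Rightarrow> ('c, 'k) fm" where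
  "ocomp mult Delta eps i f g =
     flin f (\<lambda>as. flin g (\<lambda>bs.
        fmul (fmul (basis (take (i - 1) as))
                   (fzip mult (iterD Delta eps (length bs) (as ! (i - 1))) (basis bs)))
             (basis (drop i as))))"

definition OC :: "('k::comm_ring_1 \<Rightarrow> 'c::ab_group_add \<Rightarrow> 'c) \<Rightarrow> ('c \<Rightarrow> 'c \<Rightarrow> 'c) \<Rightarrow> 'c \<Rightarrow>
   ('c \<Rightarrow> ('c, 'k) fm) \<Rightarrow> ('c \<Rightarrow> 'k) \<Rightarrow> (('c, 'k) fm, 'k) opm" where
  "OC scale mult u Delta eps =
    \<lparr> om_mem = (\<lambda>n f. hom_deg n f),
      om_null = (\<lambda>f. f \<in> mlrel scale),
      om_add = fadd, om_smult = fsmult, om_zero = fzero,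
      om_comp = ocomp mult Delta eps,
      om_mu = basis [u, u],
      om_e = basis [] \<rparr>"

text \<open>Elements of CoEnd(C)(n) = Hom_k(C, C^{\<otimes> n}) are k-linear maps,
given by representatives; f \<circ>_i g = (id^{i-1} \<otimes> g \<otimes> id^{m-i}) \<circ> f.\<close>
definition ce_mem :: "('k::comm_ring_1 \<Rightarrow> 'c::ab_group_add \<Rightarrow> 'c) \<Rightarrow> nat \<Rightarrow> ('c \<Rightarrow> ('c, 'k) fm) \<Rightarrow> bool" where
  "ce_mem scale n g \<longleftrightarrow> (\<forall>c. hom_deg n (g c)) \<and>
     (\<forall>x y. teq scale (g (x + y)) (fadd (g x) (g y))) \<and>
     (\<forall>a x. teq scale (g (scale a x)) (fsmult a (g x)))"

definition cecomp :: "nat \<Rightarrow> ('c \<Rightarrow> ('c, 'k::comm_ring_1) fm) \<Rightarrow> ('c \<Rightarrow> ('c, 'k) fm) \<Rightarrow> ('c \<Rightarrow> ('c, 'k) fm)" where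
  "cecomp i f g = (\<lambda>c. flin (f c) (\<lambda>as.
      fmul (fmul (basis (take (i - 1) as)) (g (as ! (i - 1)))) (basis (drop i as))))"

definition CE :: "('k::comm_ring_1 \<Rightarrow> 'c::ab_group_add \<Rightarrow> 'c) \<Rightarrow>
   ('c \<Rightarrow> ('c, 'k) fm) \<Rightarrow> ('c \<Rightarrow> 'k) \<Rightarrow> ('c \<Rightarrow> ('c, 'k) fm, 'k) opm" where
  "CE scale Delta eps =
    \<lparr> om_mem = ce_mem scale,
      om_null = (\<lambda>g. \<forall>c. g c \<in> mlrel scale),
      om_add = (\<lambda>f g c. fadd (f c) (g c)),
      om_smult = (\<lambda>a f c. fsmult a (f c)),
      om_zero = (\<lambda>c. fzero),
      om_comp = cecomp,
      om_mu = Delta,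
      om_e = (\<lambda>c. fsmult (eps c) (basis [])) \<rparr>"

definition extmap :: "('c \<Rightarrow> 'c \<Rightarrow> 'c) \<Rightarrow> ('c \<Rightarrow> ('c, 'k::comm_ring_1) fm) \<Rightarrow> ('c \<Rightarrow> 'k) \<Rightarrow>
    nat \<Rightarrow> ('c, 'k) fm \<Rightarrow> 'c \<Rightarrow> ('c, 'k) fm" where
  "extmap mult Delta eps n x = (\<lambda>c. fzip mult (iterD Delta eps n c) x)"

end

theory Submission
  imports Defs
begin

text \<open>The map ext is compatible with all the structure of an operad with
multiplication, already on cochains and modulo the multilinearity relations:
ext (x \<circ>_i y) agrees with ext x \<circ>_i ext y, ext (1 \<otimes> 1) = \<Delta> and ext 1 = \<epsilon>.
Compatibility with \<circ>_i rests on coassociativity in the form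
\<Delta>^(j+n+k-1) = (id^j \<otimes> \<Delta>^(n-1) \<otimes> id^k) \<circ> \<Delta>^(j+k) and on the
multiplicativity of the iterated coproduct.  Hence ext is a chain map commuting with
cup products and brackets, and induces a morphism of Gerstenhaber algebras.
Injectivity in cohomology comes from evaluation at the unit, G \<mapsto> G(1): since
\<Delta>^(n-1)(1) = 1 \<otimes> ... \<otimes> 1, it carries the differential of CoEnd(C) to that of O_C
and is a left inverse of ext.\<close>

abbreviation fin :: "('c, 'k::zero) fm \<Rightarrow> bool" where "fin f \<equiv> finite (fsupp f)"

definition homog :: "nat \<Rightarrow> ('c, 'k::zero) fm \<Rightarrow> bool" where
  "homog N f \<longleftrightarrow> (\<forall>xs. f xs \<noteq> 0 \<longrightarrow> length xs = N)"

lemma hom_deg_iff: "hom_deg n f \<longleftrightarrow> fin f \<and> homog n f"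
  by (simp add: hom_deg_def homog_def)

lemma fsupp_iff[simp]: "xs \<in> fsupp f \<longleftrightarrow> f xs \<noteq> 0"
  by (simp add: fsupp_def)

lemma fsupp_basis: "fsupp (basis w :: ('c,'k::zero_neq_one) fm) \<subseteq> {w}"
  by (auto simp: basis_def split: if_splits)

lemma fin_basis[simp]: "fin (basis w :: ('c,'k::zero_neq_one) fm)"
  using fsupp_basis finite_subset by blast

lemma fin_fzero[simp]: "fin (fzero :: ('c,'k::zero) fm)"
  by (simp add: fzero_def fsupp_def)

lemma fin_fadd[intro]: "fin f \<Longrightarrow> fin g \<Longrightarrow> fin (fadd f g :: ('c,'k::monoid_add) fm)"
  by (rule finite_subset[of _ "fsupp f \<union> fsupp g"]) (auto simp: fadd_def)

lemma fin_fsub[intro]: "fin f \<Longrightarrow> fin g \<Longrightarrow> fin (fsub f g :: ('c,'k::group_add) fm)"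
  by (rule finite_subset[of _ "fsupp f \<union> fsupp g"]) (auto simp: fsub_def)

lemma fin_fsmult[intro]: "fin f \<Longrightarrow> fin (fsmult a f :: ('c,'k::mult_zero) fm)"
  by (rule finite_subset[of _ "fsupp f"]) (auto simp: fsmult_def)

lemma homog_iff: "homog n f \<longleftrightarrow> (\<forall>xs. length xs \<noteq> n \<longrightarrow> f xs = 0)"
  unfolding homog_def by blast
lemma homog_fadd[intro]: "homog n f \<Longrightarrow> homog n g \<Longrightarrow> homog n (fadd f g :: ('c,'k::monoid_add) fm)"
  by (simp add: homog_iff fadd_def)
lemma homog_fsub[intro]: "homog n f \<Longrightarrow> homog n g \<Longrightarrow> homog n (fsub f g :: ('c,'k::group_add) fm)"
  by (simp add: homog_iff fsub_def)
lemma homog_fsmult[intro]: "homog n f \<Longrightarrow> homog n (fsmult a f :: ('c,'k::mult_zero) fm)"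
  by (simp add: homog_iff fsmult_def)
lemma homog_fzero[intro]: "homog n (fzero :: ('c,'k::zero) fm)"
  by (auto simp: homog_def fzero_def)
lemma homog_basis[intro]: "length w = n \<Longrightarrow> homog n (basis w :: ('c,'k::zero_neq_one) fm)"
  by (simp add: homog_iff basis_def)

lemma flin_superset:
  assumes "finite S" "fsupp f \<subseteq> S"
  shows "flin f Psi = (\<lambda>ys. \<Sum>xs\<in>S. f xs * Psi xs ys)"
proof
  fix ys
  show "flin f Psi ys = (\<Sum>xs\<in>S. f xs * Psi xs ys)"
    unfolding flin_def
    by (rule sum.mono_neutral_left) (use assms in auto)
qed

lemma flin_apply_superset:
  "finite S \<Longrightarrow> fsupp f \<subseteq> S \<Longrightarrow> flin f Psi ys = (\<Sum>xs\<in>S. f xs * Psi xs ys)"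
  using flin_superset by metis

lemma flin_fadd:
  fixes f g :: "('c,'k::comm_ring_1) fm"
  assumes "fin f" "fin g"
  shows "flin (fadd f g) Psi = fadd (flin f Psi) (flin g Psi)"
proof
  fix ys
  let ?S = "fsupp f \<union> fsupp g"
  have S: "finite ?S" "fsupp (fadd f g) \<subseteq> ?S" using assms by (auto simp: fadd_def)
  show "flin (fadd f g) Psi ys = fadd (flin f Psi) (flin g Psi) ys"
    unfolding flin_apply_superset[OF S] flin_apply_superset[OF S(1) Un_upper1]
      flin_apply_superset[OF S(1) Un_upper2]
    by (simp add: fadd_def distrib_right sum.distrib)
qed

lemma flin_fsmult:
  fixes f :: "('c,'k::comm_ring_1) fm"
  assumes "fin f"
  shows "flin (fsmult a f) Psi = fsmult a (flin f Psi)"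
proof
  fix ys
  have S: "fsupp (fsmult a f) \<subseteq> fsupp f" by (auto simp: fsmult_def)
  show "flin (fsmult a f) Psi ys = fsmult a (flin f Psi) ys"
    unfolding flin_apply_superset[OF assms S] flin_apply_superset[OF assms order.refl]
    by (simp add: fsmult_def sum_distrib_left mult.assoc)
qed

lemma flin_fsub:
  fixes f g :: "('c,'k::comm_ring_1) fm"
  assumes "fin f" "fin g"
  shows "flin (fsub f g) Psi = fsub (flin f Psi) (flin g Psi)"
proof
  fix ys
  let ?S = "fsupp f \<union> fsupp g"
  have S: "finite ?S" "fsupp (fsub f g) \<subseteq> ?S" using assms by (auto simp: fsub_def)
  show "flin (fsub f g) Psi ys = fsub (flin f Psi) (flin g Psi) ys"
    unfolding flin_apply_superset[OF S] flin_apply_superset[OF S(1) Un_upper1]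
      flin_apply_superset[OF S(1) Un_upper2]
    by (simp add: fsub_def left_diff_distrib sum_subtractf)
qed

lemma flin_fzero[simp]: "flin fzero Psi = (fzero :: ('d,'k::comm_ring_1) fm)"
  by (simp add: flin_def fzero_def fsupp_def)

lemma flin_basis[simp]: "flin (basis w) Psi = (Psi w :: ('d,'k::comm_ring_1) fm)"
  by (subst flin_superset[of "{w}"]) (auto simp: fsupp_basis basis_def split: if_splits)

lemma flin_cong:
  "(\<And>xs. f xs \<noteq> 0 \<Longrightarrow> Psi xs = Phi xs) \<Longrightarrow> flin f Psi = flin f Phi"
  unfolding flin_def by (intro ext sum.cong) auto

lemma flin_fzero_right[simp]: "flin f (\<lambda>_. fzero) = (fzero :: ('d,'k::comm_ring_1) fm)"
  by (simp add: flin_def fzero_def)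

lemma flin_fadd_right:
  "flin f (\<lambda>xs. fadd (Psi xs) (Phi xs)) = fadd (flin f Psi) (flin f Phi)"
  by (simp add: flin_def fadd_def distrib_left sum.distrib)

lemma flin_fsub_right:
  "flin f (\<lambda>xs. fsub (Psi xs) (Phi xs)) = fsub (flin f Psi) (flin f Phi)"
  by (simp add: flin_def fsub_def right_diff_distrib sum_subtractf)

lemma flin_fsmult_right:
  "flin f (\<lambda>xs. fsmult a (Psi xs)) = fsmult a (flin f Psi)"
  by (simp add: flin_def fsmult_def sum_distrib_left algebra_simps)

lemma fsupp_flin: "fsupp (flin f Psi) \<subseteq> (\<Union>xs\<in>fsupp f. fsupp (Psi xs))"
proof
  fix ys assume "ys \<in> fsupp (flin f Psi)"
  hence "(\<Sum>xs\<in>fsupp f. f xs * Psi xs ys) \<noteq> 0" by (simp add: flin_def)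
  then obtain xs where "xs \<in> fsupp f" "f xs * Psi xs ys \<noteq> 0"
    by (meson sum.neutral)
  thus "ys \<in> (\<Union>xs\<in>fsupp f. fsupp (Psi xs))" by force
qed

lemma fin_flin[intro]:
  "fin f \<Longrightarrow> (\<And>xs. f xs \<noteq> 0 \<Longrightarrow> fin (Psi xs)) \<Longrightarrow> fin (flin f Psi)"
  by (rule finite_subset[OF fsupp_flin]) auto

lemma homog_flin[intro]:
  "(\<And>xs. f xs \<noteq> 0 \<Longrightarrow> homog n (Psi xs)) \<Longrightarrow> homog n (flin f Psi)"
  using fsupp_flin unfolding homog_def by (fastforce)

lemma flin_assoc:
  fixes f :: "('c,'k::comm_ring_1) fm"
  assumes "fin f" "\<And>xs. f xs \<noteq> 0 \<Longrightarrow> fin (Psi xs)"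
  shows "flin (flin f Psi) Phi = flin f (\<lambda>xs. flin (Psi xs) Phi)"
proof
  fix ys
  let ?U = "\<Union>xs\<in>fsupp f. fsupp (Psi xs)"
  have U: "finite ?U" using assms by auto
  have "flin (flin f Psi) Phi ys = (\<Sum>zs\<in>?U. flin f Psi zs * Phi zs ys)"
    by (rule flin_apply_superset[OF U fsupp_flin])
  also have "\<dots> = (\<Sum>zs\<in>?U. \<Sum>xs\<in>fsupp f. f xs * Psi xs zs * Phi zs ys)"
    by (simp add: flin_def sum_distrib_right)
  also have "\<dots> = (\<Sum>xs\<in>fsupp f. f xs * (\<Sum>zs\<in>?U. Psi xs zs * Phi zs ys))"
    by (subst sum.swap) (simp add: sum_distrib_left mult.assoc)
  also have "\<dots> = (\<Sum>xs\<in>fsupp f. f xs * flin (Psi xs) Phi ys)"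
    by (intro sum.cong refl) (subst flin_apply_superset[OF U]; auto)
  finally show "flin (flin f Psi) Phi ys = flin f (\<lambda>xs. flin (Psi xs) Phi) ys"
    by (simp add: flin_def)
qed

lemma flin_swap:
  "flin f (\<lambda>a. flin g (\<lambda>b. Theta a b)) = flin g (\<lambda>b. flin f (\<lambda>a. Theta a b))"
  unfolding flin_def
  by (rule ext) (simp add: sum_distrib_left sum.swap[of _ "fsupp f"] mult.left_commute)

lemma flin_id:
  fixes f :: "('c,'k::comm_ring_1) fm"
  assumes "fin f" shows "flin f basis = f"
proof
  fix ys
  show "flin f basis ys = f ys"
    by (subst flin_apply_superset[of "insert ys (fsupp f)"])
       (use assms in \<open>auto simp: basis_def sum.delta'[of _ ys] if_distrib cong: if_cong\<close>)
qed

declare fin_fadd[simp] fin_fsub[simp] fin_fsmult[simp]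

lemma flin_append_basis:
  fixes g :: "('c,'k::comm_ring_1) fm"
  assumes "fin g"
  shows "flin g (\<lambda>b. basis (a @ b)) xs =
    (if take (length a) xs = a then g (drop (length a) xs) else 0)"
proof -
  let ?S = "insert (drop (length a) xs) (fsupp g)"
  have "flin g (\<lambda>b. basis (a @ b)) xs = (\<Sum>b\<in>?S. g b * basis (a @ b) xs)"
    by (rule flin_apply_superset) (use assms in auto)
  also have "\<dots> = (\<Sum>b\<in>?S. if b = drop (length a) xs then
        (if take (length a) xs = a then g b else 0) else 0)"
    by (intro sum.cong refl) (auto simp: basis_def append_eq_conv_conj, (metis append_take_drop_id)+)
  also have "\<dots> = (if take (length a) xs = a then g (drop (length a) xs) else 0)"
    using assms by (simp add: sum.delta')
  finally show ?thesis .
qed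

lemma fmul_flin:
  fixes f g :: "('c,'k::comm_ring_1) fm"
  assumes "fin f" "fin g"
  shows "fmul f g = flin f (\<lambda>a. flin g (\<lambda>b. basis (a @ b)))"
proof
  fix xs :: "'c list"
  let ?T = "(\<lambda>i. take i xs) ` {..length xs}"
  have T: "a \<in> ?T \<longleftrightarrow> take (length a) xs = a" for a :: "'c list"
  proof
    assume "a \<in> ?T" then show "take (length a) xs = a" by auto
  next
    assume h: "take (length a) xs = a"
    hence "length a \<le> length xs" by (metis length_take min.absorb_iff2 min.commute)
    thus "a \<in> ?T" using h by force
  qed
  let ?S = "fsupp f \<union> ?T"
  have "flin f (\<lambda>a. flin g (\<lambda>b. basis (a @ b))) xs
      = (\<Sum>a\<in>?S. f a * flin g (\<lambda>b. basis (a @ b)) xs)"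
    by (rule flin_apply_superset) (use assms in auto)
  also have "\<dots> = (\<Sum>a\<in>?S. if a \<in> ?T then f a * g (drop (length a) xs) else 0)"
    by (rule sum.cong) (auto simp: flin_append_basis[OF assms(2)] T)
  also have "\<dots> = (\<Sum>a\<in>?T. f a * g (drop (length a) xs))"
    by (subst sum.If_cases) (use assms in \<open>auto simp: Int_absorb1\<close>)
  also have "\<dots> = (\<Sum>i\<in>{..length xs}. f (take i xs) * g (drop i xs))"
  proof -
    have inj: "inj_on (\<lambda>i. take i xs) {..length xs}"
    proof (rule inj_onI)
      fix i j assume "i \<in> {..length xs}" "j \<in> {..length xs}" "take i xs = take j xs"
      then show "i = j" by (metis atMost_iff length_take min.absorb2)
    qed
    show ?thesis by (simp add: sum.reindex[OF inj])
  qed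
  finally show "fmul f g xs = flin f (\<lambda>a. flin g (\<lambda>b. basis (a @ b))) xs"
    by (simp add: fmul_def)
qed

lemma fin_fmul[intro]:
  fixes f g :: "('c,'k::comm_ring_1) fm"
  assumes "fin f" "fin g" shows "fin (fmul f g)"
  using assms by (simp add: fmul_flin) (intro fin_flin; auto)

lemma homog_fmul[intro]:
  fixes f g :: "('c,'k::comm_ring_1) fm"
  assumes "fin f" "fin g" "homog p f" "homog q g" shows "homog (p + q) (fmul f g)"
  using assms by (simp add: fmul_flin) (intro homog_flin; auto simp: homog_def basis_def split: if_splits)

lemma homog_fmul':
  fixes f g :: "('c,'k::comm_ring_1) fm"
  shows "fin f \<Longrightarrow> fin g \<Longrightarrow> homog p f \<Longrightarrow> homog q g \<Longrightarrow> n = p + q \<Longrightarrow> homog n (fmul f g)"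
  using homog_fmul by blast

lemma fmul_basis_basis[simp]: "fmul (basis a) (basis b) = (basis (a @ b) :: ('c,'k::comm_ring_1) fm)"
  by (simp add: fmul_flin)

lemma fmul_basis_left:
  fixes F :: "('c,'k::comm_ring_1) fm"
  shows "fin F \<Longrightarrow> fmul (basis a) F = flin F (\<lambda>w. basis (a @ w))"
  by (simp add: fmul_flin)

lemma fmul_flin_left:
  fixes f g :: "('c,'k::comm_ring_1) fm"
  assumes "fin f" "\<And>xs. f xs \<noteq> 0 \<Longrightarrow> fin (Psi xs)" "fin g"
  shows "fmul (flin f Psi) g = flin f (\<lambda>a. fmul (Psi a) g)"
  using assms by (simp add: fmul_flin flin_assoc fin_flin cong: flin_cong)

lemma fmul_flin_right:
  fixes f g :: "('c,'k::comm_ring_1) fm"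
  assumes "fin f" "\<And>xs. f xs \<noteq> 0 \<Longrightarrow> fin (Psi xs)" "fin g"
  shows "fmul g (flin f Psi) = flin f (\<lambda>a. fmul g (Psi a))"
proof -
  have "fmul g (flin f Psi) = flin g (\<lambda>a. flin f (\<lambda>b. flin (Psi b) (\<lambda>c. basis (a @ c))))"
    using assms by (simp add: fmul_flin flin_assoc fin_flin)
  also have "\<dots> = flin f (\<lambda>b. flin g (\<lambda>a. flin (Psi b) (\<lambda>c. basis (a @ c))))"
    by (rule flin_swap)
  also have "\<dots> = flin f (\<lambda>a. fmul g (Psi a))"
    using assms by (intro flin_cong) (simp add: fmul_flin)
  finally show ?thesis .
qed

lemma flin_fmul:
  fixes F G :: "('c,'k::comm_ring_1) fm"
  assumes "fin F" "fin G"
  shows "flin (fmul F G) Theta = flin F (\<lambda>a. flin G (\<lambda>b. Theta (a @ b)))"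
  using assms by (simp add: fmul_flin flin_assoc fin_flin)

lemma fmul_assoc:
  fixes f g h :: "('c,'k::comm_ring_1) fm"
  assumes "fin f" "fin g" "fin h"
  shows "fmul (fmul f g) h = fmul f (fmul g h)"
proof -
  have "fmul (fmul f g) h = flin f (\<lambda>a. flin g (\<lambda>b. flin h (\<lambda>c. basis (a @ b @ c))))"
    using assms by (simp add: fmul_flin[of "fmul f g"] flin_fmul fin_fmul)
  also have "\<dots> = fmul f (fmul g h)"
    using assms by (simp add: fmul_flin[of f "fmul g h"] flin_fmul fin_fmul)
  finally show ?thesis .
qed

lemma fmul_fadd_left: "fin f \<Longrightarrow> fin g \<Longrightarrow> fin h \<Longrightarrow>
   fmul (fadd f g) h = fadd (fmul f h) (fmul g h :: ('c,'k::comm_ring_1) fm)"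
  by (simp add: fmul_flin flin_fadd)
lemma fmul_fadd_right: "fin f \<Longrightarrow> fin g \<Longrightarrow> fin h \<Longrightarrow>
   fmul h (fadd f g) = fadd (fmul h f) (fmul h g :: ('c,'k::comm_ring_1) fm)"
  by (simp add: fmul_flin flin_fadd flin_fadd_right)
lemma fmul_fsub_left: "fin f \<Longrightarrow> fin g \<Longrightarrow> fin h \<Longrightarrow>
   fmul (fsub f g) h = fsub (fmul f h) (fmul g h :: ('c,'k::comm_ring_1) fm)"
  by (simp add: fmul_flin flin_fsub)
lemma fmul_fsub_right: "fin f \<Longrightarrow> fin g \<Longrightarrow> fin h \<Longrightarrow>
   fmul h (fsub f g) = fsub (fmul h f) (fmul h g :: ('c,'k::comm_ring_1) fm)"
  by (simp add: fmul_flin flin_fsub flin_fsub_right)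
lemma fmul_fsmult_left: "fin f \<Longrightarrow> fin h \<Longrightarrow>
   fmul (fsmult a f) h = fsmult a (fmul f h :: ('c,'k::comm_ring_1) fm)"
  by (simp add: fmul_flin flin_fsmult)
lemma fmul_fsmult_right: "fin f \<Longrightarrow> fin h \<Longrightarrow>
   fmul h (fsmult a f) = fsmult a (fmul h f :: ('c,'k::comm_ring_1) fm)"
  by (simp add: fmul_flin flin_fsmult flin_fsmult_right)

lemma fmul_nil_left[simp]: "fin F \<Longrightarrow> fmul (basis []) F = (F :: ('c,'k::comm_ring_1) fm)"
  by (simp add: fmul_basis_left flin_id)

lemma fin_fzip[intro]:
  fixes f g :: "('c,'k::comm_ring_1) fm"
  shows "fin f \<Longrightarrow> fin g \<Longrightarrow> fin (fzip m f g)"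
  unfolding fzip_def by (intro fin_flin; auto)

lemma homog_fzip[intro]:
  fixes f g :: "('c,'k::comm_ring_1) fm"
  shows "homog n f \<Longrightarrow> homog n g \<Longrightarrow> homog n (fzip m f g)"
  unfolding fzip_def by (intro homog_flin homog_basis; auto simp: homog_def)

lemma fzip_basis_right: "fzip m f (basis w) = flin f (\<lambda>xs. basis (map2 m xs w))"
  by (simp add: fzip_def)
lemma fzip_basis_left: "fzip m (basis w) g = flin g (\<lambda>ys. basis (map2 m w ys))"
  by (simp add: fzip_def)

lemma fzip_flin_left:
  fixes f g :: "('c,'k::comm_ring_1) fm"
  assumes "fin f" "\<And>xs. f xs \<noteq> 0 \<Longrightarrow> fin (Psi xs)"
  shows "fzip m (flin f Psi) g = flin f (\<lambda>a. fzip m (Psi a) g)"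
  using assms by (simp add: fzip_def flin_assoc)

lemma fzip_flin_right:
  fixes f g :: "('c,'k::comm_ring_1) fm"
  assumes "fin f" "\<And>xs. f xs \<noteq> 0 \<Longrightarrow> fin (Psi xs)"
  shows "fzip m g (flin f Psi) = flin f (\<lambda>a. fzip m g (Psi a))"
proof -
  have "fzip m g (flin f Psi) = flin g (\<lambda>a. flin f (\<lambda>x. flin (Psi x) (\<lambda>b. basis (map2 m a b))))"
    using assms by (simp add: fzip_def flin_assoc)
  also have "\<dots> = flin f (\<lambda>x. flin g (\<lambda>a. flin (Psi x) (\<lambda>b. basis (map2 m a b))))"
    by (rule flin_swap)
  also have "\<dots> = flin f (\<lambda>a. fzip m g (Psi a))" by (simp add: fzip_def)
  finally show ?thesis .
qed

lemma fzip_fadd_left: "fin f \<Longrightarrow> fin g \<Longrightarrow>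
   fzip m (fadd f g) h = fadd (fzip m f h) (fzip m g h :: ('c,'k::comm_ring_1) fm)"
  by (simp add: fzip_def flin_fadd)
lemma fzip_fsmult_left: "fin f \<Longrightarrow>
   fzip m (fsmult a f) h = fsmult a (fzip m f h :: ('c,'k::comm_ring_1) fm)"
  by (simp add: fzip_def flin_fsmult)
lemma fzip_fadd_right: "fin f \<Longrightarrow> fin g \<Longrightarrow>
   fzip m h (fadd f g) = fadd (fzip m h f) (fzip m h g :: ('c,'k::comm_ring_1) fm)"
  by (simp add: fzip_def flin_fadd flin_fadd_right)
lemma fzip_fsmult_right: "fin f \<Longrightarrow>
   fzip m h (fsmult a f) = fsmult a (fzip m h f :: ('c,'k::comm_ring_1) fm)"
  by (simp add: fzip_def flin_fsmult flin_fsmult_right)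

lemma fzip_assoc:
  fixes f g h :: "('c,'k::comm_ring_1) fm"
  assumes "fin f" "fin g" "fin h" and massoc: "\<And>x y z. m (m x y) z = m x (m y z)"
  shows "fzip m (fzip m f g) h = fzip m f (fzip m g h)"
proof -
  have l: "map2 m (map2 m a b) c = map2 m a (map2 m b c)" for a b c
  proof (induction a arbitrary: b c)
    case (Cons x a) then show ?case by (cases b; cases c) (auto simp: massoc)
  qed simp
  have "fzip m (fzip m f g) h = flin f (\<lambda>a. flin g (\<lambda>b. flin h (\<lambda>c. basis (map2 m (map2 m a b) c))))"
    using assms by (simp add: fzip_def flin_assoc fin_flin)
  also have "\<dots> = fzip m f (fzip m g h)"
    using assms by (simp add: fzip_def flin_assoc fin_flin l)
  finally show ?thesis .
qed

lemma fzip_fmul: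
  fixes F1 F2 G1 G2 :: "('c,'k::comm_ring_1) fm"
  assumes "fin F1" "fin F2" "fin G1" "fin G2" "homog p F1" "homog p G1"
  shows "fzip m (fmul F1 F2) (fmul G1 G2) = fmul (fzip m F1 G1) (fzip m F2 G2)"
proof -
  have "fzip m (fmul F1 F2) (fmul G1 G2) =
    flin F1 (\<lambda>a1. flin F2 (\<lambda>a2. flin G1 (\<lambda>b1. flin G2 (\<lambda>b2. basis (map2 m (a1 @ a2) (b1 @ b2))))))"
    using assms by (simp add: fzip_def flin_fmul)
  also have "\<dots> = flin F1 (\<lambda>a1. flin F2 (\<lambda>a2. flin G1 (\<lambda>b1. flin G2 (\<lambda>b2. basis (map2 m a1 b1 @ map2 m a2 b2)))))"
    using assms(5,6) by (intro flin_cong) (auto simp: homog_def)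
  also have "\<dots> = flin F1 (\<lambda>a1. flin G1 (\<lambda>b1. flin F2 (\<lambda>a2. flin G2 (\<lambda>b2. basis (map2 m a1 b1 @ map2 m a2 b2)))))"
    by (intro flin_cong flin_swap)
  also have "\<dots> = fmul (fzip m F1 G1) (fzip m F2 G2)"
    using assms by (simp add: fzip_def fmul_flin flin_assoc fin_flin)
  finally show ?thesis .
qed

section \<open>Multilinearity relations\<close>

context
  fixes scale :: "'k::comm_ring_1 \<Rightarrow> 'c::ab_group_add \<Rightarrow> 'c"
begin

abbreviation MLR where "MLR \<equiv> mlrel scale"

lemma mlrel_fin: "f \<in> MLR \<Longrightarrow> fin f"
proof (induction rule: mlrel.induct)
  case (rel_add xs x y ys) then show ?case by (intro fin_fsub fin_fadd fin_basis)
next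
  case (rel_smult xs a x ys) then show ?case by (intro fin_fsub fin_fsmult fin_basis)
qed auto

lemma mlrel_sub: "f \<in> MLR \<Longrightarrow> g \<in> MLR \<Longrightarrow> fsub f g \<in> MLR"
proof -
  assume "f \<in> MLR" "g \<in> MLR"
  hence "fadd f (fsmult (-1) g) \<in> MLR" by (intro mlrel.rel_plus mlrel.rel_scale)
  moreover have "fadd f (fsmult (-1) g) = fsub f g" by (simp add: fadd_def fsmult_def fsub_def)
  ultimately show ?thesis by simp
qed

lemma mlrel_eq_zero: "f = fzero \<Longrightarrow> f \<in> MLR"
  using mlrel.rel_zero by simp

lemma mlrel_sum: "(\<And>i. i \<in> S \<Longrightarrow> g i \<in> MLR) \<Longrightarrow> (\<lambda>ys. \<Sum>i\<in>S. g i ys) \<in> MLR"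
proof (induction S rule: infinite_finite_induct)
  case (infinite A) then show ?case by (simp add: mlrel_eq_zero fzero_def)
next
  case empty then show ?case by (simp add: mlrel_eq_zero fzero_def)
next
  case (insert x F)
  have "(\<lambda>ys. \<Sum>i\<in>insert x F. g i ys) = fadd (g x) (\<lambda>ys. \<Sum>i\<in>F. g i ys)"
    using insert by (simp add: fadd_def)
  then show ?case using insert by (simp add: mlrel.rel_plus)
qed

lemma flin_mlrel: "(\<And>xs. f xs \<noteq> 0 \<Longrightarrow> Psi xs \<in> MLR) \<Longrightarrow> flin f Psi \<in> MLR"
proof -
  assume h: "\<And>xs. f xs \<noteq> 0 \<Longrightarrow> Psi xs \<in> MLR"
  have "flin f Psi = (\<lambda>ys. \<Sum>xs\<in>fsupp f. fsmult (f xs) (Psi xs) ys)"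
    by (simp add: flin_def fsmult_def)
  also have "\<dots> \<in> MLR" by (rule mlrel_sum) (use h in \<open>auto intro: mlrel.rel_scale\<close>)
  finally show ?thesis .
qed

abbreviation teqs (infix "\<approx>" 50) where "f \<approx> g \<equiv> teq scale f g"

lemma teq_refl[simp, intro]: "f \<approx> f"
  by (simp add: teq_def mlrel_eq_zero fsub_def fzero_def)

lemma teq_sym: "f \<approx> g \<Longrightarrow> g \<approx> f"
proof -
  assume "f \<approx> g"
  hence "fsmult (-1) (fsub f g) \<in> MLR" unfolding teq_def by (rule mlrel.rel_scale)
  moreover have "fsmult (-1) (fsub f g) = fsub g f" by (simp add: fsmult_def fsub_def)
  ultimately show ?thesis by (simp add: teq_def)
qed

lemma teq_trans[trans]: "f \<approx> g \<Longrightarrow> g \<approx> h \<Longrightarrow> f \<approx> h"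
proof -
  assume "f \<approx> g" "g \<approx> h"
  hence "fadd (fsub f g) (fsub g h) \<in> MLR" unfolding teq_def by (rule mlrel.rel_plus)
  moreover have "fadd (fsub f g) (fsub g h) = fsub f h" by (simp add: fadd_def fsub_def)
  ultimately show ?thesis by (simp add: teq_def)
qed

lemma eq_teq_trans[trans]: "f = g \<Longrightarrow> g \<approx> h \<Longrightarrow> f \<approx> h" by simp
lemma teq_eq_trans[trans]: "f \<approx> g \<Longrightarrow> g = h \<Longrightarrow> f \<approx> h" by simp

lemma teq_fadd: "f \<approx> f' \<Longrightarrow> g \<approx> g' \<Longrightarrow> fadd f g \<approx> fadd f' g'"
proof -
  assume "f \<approx> f'" "g \<approx> g'"
  hence "fadd (fsub f f') (fsub g g') \<in> MLR" unfolding teq_def by (rule mlrel.rel_plus)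
  moreover have "fadd (fsub f f') (fsub g g') = fsub (fadd f g) (fadd f' g')"
    by (simp add: fadd_def fsub_def algebra_simps)
  ultimately show ?thesis by (simp add: teq_def)
qed

lemma teq_fsmult: "f \<approx> f' \<Longrightarrow> fsmult a f \<approx> fsmult a f'"
proof -
  assume "f \<approx> f'"
  hence "fsmult a (fsub f f') \<in> MLR" unfolding teq_def by (rule mlrel.rel_scale)
  moreover have "fsmult a (fsub f f') = fsub (fsmult a f) (fsmult a f')"
    by (simp add: fsmult_def fsub_def algebra_simps)
  ultimately show ?thesis by (simp add: teq_def)
qed

lemma teq_zero_iff: "f \<approx> fzero \<longleftrightarrow> f \<in> MLR"
proof -
  have "fsub f fzero = f" by (simp add: fsub_def fzero_def)
  thus ?thesis by (simp add: teq_def)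
qed

lemma teq_mlrel: "f \<approx> g \<Longrightarrow> g \<in> MLR \<Longrightarrow> f \<in> MLR"
  using teq_trans teq_zero_iff by blast

lemma teq_flin_right:
  "(\<And>xs. f xs \<noteq> 0 \<Longrightarrow> Psi xs \<approx> Phi xs) \<Longrightarrow> flin f Psi \<approx> flin f Phi"
  unfolding teq_def flin_fsub_right[symmetric] by (rule flin_mlrel)

text \<open>Linear extension along a multilinear family respects tensor equality
(teq_flin_left); this is how maps are shown to be well defined on tensor powers.\<close>

definition multilinear :: "nat \<Rightarrow> ('c list \<Rightarrow> ('c,'k) fm) \<Rightarrow> bool" where
  "multilinear N Psi \<longleftrightarrow>
    (\<forall>xs x y ys. length xs + length ys + 1 = N \<longrightarrow>
        Psi (xs @ (x + y) # ys) \<approx> fadd (Psi (xs @ x # ys)) (Psi (xs @ y # ys))) \<and>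
    (\<forall>xs a x ys. length xs + length ys + 1 = N \<longrightarrow>
        Psi (xs @ scale a x # ys) \<approx> fsmult a (Psi (xs @ x # ys))) \<and>
    (\<forall>ws. length ws = N \<longrightarrow> fin (Psi ws))"

definition proj_deg :: "nat \<Rightarrow> ('c,'k) fm \<Rightarrow> ('c,'k) fm" where
  "proj_deg N f = (\<lambda>xs. if length xs = N then f xs else 0)"

lemma proj_deg_homog: "homog N f \<Longrightarrow> proj_deg N f = f"
  by (auto simp: proj_deg_def homog_iff)

lemma proj_deg_basis: "proj_deg N (basis w) = (if length w = N then basis w else fzero)"
  by (auto simp: proj_deg_def basis_def fzero_def)

lemma proj_deg_fadd: "proj_deg N (fadd f g) = fadd (proj_deg N f) (proj_deg N g)"
  by (auto simp: proj_deg_def fadd_def)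
lemma proj_deg_fsub: "proj_deg N (fsub f g) = fsub (proj_deg N f) (proj_deg N g)"
  by (auto simp: proj_deg_def fsub_def)
lemma proj_deg_fsmult: "proj_deg N (fsmult a f) = fsmult a (proj_deg N f)"
  by (auto simp: proj_deg_def fsmult_def)

lemma fin_proj_deg: "fin f \<Longrightarrow> fin (proj_deg N f)"
  by (rule finite_subset[of _ "fsupp f"]) (auto simp: proj_deg_def split: if_splits)

lemma flin_proj_deg_mlrel:
  assumes "f \<in> MLR" "multilinear N Psi"
  shows "flin (proj_deg N f) Psi \<in> MLR"
  using assms(1)
proof (induction rule: mlrel.induct)
  case (rel_add xs x y ys)
  show ?case
  proof (cases "length xs + length ys + 1 = N")
    case True
    then show ?thesis using assms(2)
      by (simp add: proj_deg_fsub proj_deg_fadd proj_deg_basis flin_fsub flin_fadd multilinear_def teq_def)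
  next
    case False
    then have "proj_deg N (fsub (basis (xs @ (x + y) # ys)) (fadd (basis (xs @ x # ys)) (basis (xs @ y # ys)))) = fzero"
      by (auto simp: proj_deg_def basis_def fzero_def fsub_def fadd_def)
    then show ?thesis by (simp add: mlrel_eq_zero)
  qed
next
  case (rel_smult xs a x ys)
  show ?case
  proof (cases "length xs + length ys + 1 = N")
    case True
    then show ?thesis using assms(2)
      by (simp add: proj_deg_fsub proj_deg_fsmult proj_deg_basis flin_fsub flin_fsmult multilinear_def teq_def)
  next
    case False
    then have "proj_deg N (fsub (basis (xs @ scale a x # ys)) (fsmult a (basis (xs @ x # ys)))) = fzero"
      by (auto simp: proj_deg_def basis_def fzero_def fsub_def fsmult_def)
    then show ?thesis by (simp add: mlrel_eq_zero)
  qed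
next
  case rel_zero
  have "proj_deg N fzero = fzero" by (simp add: proj_deg_def fzero_def)
  then show ?case by (simp add: mlrel.rel_zero)
next
  case (rel_plus f g)
  then show ?case
    by (simp add: proj_deg_fadd flin_fadd fin_proj_deg mlrel_fin mlrel.rel_plus)
next
  case (rel_scale f a)
  then show ?case
    by (simp add: proj_deg_fsmult flin_fsmult fin_proj_deg mlrel_fin mlrel.rel_scale)
qed

lemma flin_mlrel_homog: "f \<in> MLR \<Longrightarrow> homog N f \<Longrightarrow> multilinear N Psi \<Longrightarrow> flin f Psi \<in> MLR"
  using flin_proj_deg_mlrel proj_deg_homog by metis

lemma teq_flin_left:
  assumes "f \<approx> g" "fin f" "fin g" "homog N f" "homog N g" "multilinear N Psi"
  shows "flin f Psi \<approx> flin g Psi"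
  using assms flin_mlrel_homog[of "fsub f g" N Psi]
  by (simp add: teq_def flin_fsub homog_fsub)

definition multilinear_all :: "('c list \<Rightarrow> ('c,'k) fm) \<Rightarrow> bool" where
  "multilinear_all Psi \<longleftrightarrow> (\<forall>N. multilinear N Psi)"

lemma flin_mlrel_all: "f \<in> MLR \<Longrightarrow> multilinear_all Psi \<Longrightarrow> flin f Psi \<in> MLR"
proof -
  assume f: "f \<in> MLR" and P: "multilinear_all Psi"
  have fin: "fin f" using f mlrel_fin by blast
  let ?L = "length ` fsupp f"
  have feq: "f = (\<lambda>xs. \<Sum>N\<in>?L. proj_deg N f xs)"
  proof
    fix xs
    have "(\<Sum>N\<in>?L. proj_deg N f xs) = (if length xs \<in> ?L then f xs else 0)"
      unfolding proj_deg_def using fin by (simp add: sum.delta)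
    then show "f xs = (\<Sum>N\<in>?L. proj_deg N f xs)" by auto
  qed
  hence "flin f Psi = flin (\<lambda>xs. \<Sum>N\<in>?L. proj_deg N f xs) Psi" by simp
  also have "\<dots> = (\<lambda>ys. \<Sum>N\<in>?L. flin (proj_deg N f) Psi ys)"
  proof
    fix ys
    have "flin (\<lambda>xs. \<Sum>N\<in>?L. proj_deg N f xs) Psi ys = (\<Sum>xs\<in>fsupp f. (\<Sum>N\<in>?L. proj_deg N f xs) * Psi xs ys)"
      by (rule flin_apply_superset) (use fin feq[symmetric] in auto)
    also have "\<dots> = (\<Sum>N\<in>?L. \<Sum>xs\<in>fsupp f. proj_deg N f xs * Psi xs ys)"
      by (simp add: sum_distrib_right sum.swap[of _ "fsupp f"])
    also have "\<dots> = (\<Sum>N\<in>?L. flin (proj_deg N f) Psi ys)"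
      by (rule sum.cong, simp, rule flin_apply_superset[symmetric]) (use fin in \<open>auto simp: proj_deg_def split: if_splits\<close>)
    finally show "flin (\<lambda>xs. \<Sum>N\<in>?L. proj_deg N f xs) Psi ys = (\<Sum>N\<in>?L. flin (proj_deg N f) Psi ys)" .
  qed
  also have "\<dots> \<in> MLR"
    by (rule mlrel_sum) (use f P flin_proj_deg_mlrel in \<open>auto simp: multilinear_all_def\<close>)
  finally show ?thesis .
qed

lemma multilinear_cong: "multilinear N Phi \<Longrightarrow> (\<And>ws. length ws = N \<Longrightarrow> Psi ws = Phi ws) \<Longrightarrow> multilinear N Psi"
  unfolding multilinear_def by auto

lemma multilinear_basis: "multilinear N basis"
  unfolding multilinear_def teq_def by (auto intro: mlrel.intros)

definition klinear :: "('c \<Rightarrow> ('c,'k) fm) \<Rightarrow> bool" where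
  "klinear F \<longleftrightarrow> (\<forall>x y. F (x + y) \<approx> fadd (F x) (F y)) \<and> (\<forall>a x. F (scale a x) \<approx> fsmult a (F x)) \<and> (\<forall>x. fin (F x))"

lemma multilinear_single: "klinear F \<Longrightarrow> multilinear 1 (\<lambda>ws. F (ws ! 0))"
  unfolding multilinear_def klinear_def by auto

lemma fmul_mlrel_left: "f \<in> MLR \<Longrightarrow> fin g \<Longrightarrow> fmul f g \<in> MLR"
proof -
  assume f: "f \<in> MLR" and g: "fin g"
  have "multilinear_all (\<lambda>a. flin g (\<lambda>b. basis (a @ b)))"
    unfolding multilinear_all_def multilinear_def
  proof (intro allI conjI impI)
    fix N xs x y ys
    show "flin g (\<lambda>b. basis ((xs @ (x + y) # ys) @ b)) \<approx>
          fadd (flin g (\<lambda>b. basis ((xs @ x # ys) @ b))) (flin g (\<lambda>b. basis ((xs @ y # ys) @ b)))"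
      unfolding flin_fadd_right[symmetric] by (rule teq_flin_right) (auto simp: teq_def intro: mlrel.intros)
  next
    fix N xs a x ys
    show "flin g (\<lambda>b. basis ((xs @ scale a x # ys) @ b)) \<approx> fsmult a (flin g (\<lambda>b. basis ((xs @ x # ys) @ b)))"
      unfolding flin_fsmult_right[symmetric] by (rule teq_flin_right) (auto simp: teq_def intro: mlrel.intros)
  next
    fix N ws show "fin (flin g (\<lambda>b. basis (ws @ b)))" using g by auto
  qed
  then show ?thesis using f g mlrel_fin by (simp add: fmul_flin flin_mlrel_all)
qed

lemma fmul_mlrel_right: "f \<in> MLR \<Longrightarrow> fin g \<Longrightarrow> fmul g f \<in> MLR"
proof -
  assume f: "f \<in> MLR" and g: "fin g"
  have "multilinear_all (\<lambda>b. basis (a @ b))" for a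
    unfolding multilinear_all_def multilinear_def teq_def
    by (auto intro: mlrel.intros simp del: append.simps append_assoc simp: append_assoc[symmetric])
  hence "flin f (\<lambda>b. basis (a @ b)) \<in> MLR" for a using f flin_mlrel_all by blast
  then show ?thesis using f g mlrel_fin by (simp add: fmul_flin flin_mlrel)
qed

lemma teq_fmul:
  assumes "f \<approx> f'" "g \<approx> g'" "fin f" "fin f'" "fin g" "fin g'"
  shows "fmul f g \<approx> fmul f' g'"
proof -
  have "fmul f g \<approx> fmul f' g"
    using fmul_mlrel_left[of "fsub f f'" g] assms by (simp add: teq_def fmul_fsub_left)
  also have "fmul f' g \<approx> fmul f' g'"
    using fmul_mlrel_right[of "fsub g g'" f'] assms by (simp add: teq_def fmul_fsub_right)
  finally show ?thesis .
qed

text \<open>C stands for the right-hand side of either multilinearity relation, so that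
additivity and homogeneity in the slot z are treated at once.\<close>
lemma fmul_take_drop_slot:
  fixes C :: "('c \<Rightarrow> ('c,'k) fm) \<Rightarrow> ('c,'k) fm"
  assumes P: "multilinear p P" and Q: "multilinear q Q"
    and len: "length xs + length ys + 1 = p + q"
    and r1: "\<And>as bs. length as + length bs + 1 = p \<Longrightarrow> P (as @ z # bs) \<approx> C (\<lambda>w. P (as @ w # bs))"
    and r2: "\<And>as bs. length as + length bs + 1 = q \<Longrightarrow> Q (as @ z # bs) \<approx> C (\<lambda>w. Q (as @ w # bs))"
    and Cfin: "\<And>H. (\<And>w. fin (H w)) \<Longrightarrow> fin (C H)"
    and Cmul_l: "\<And>H G. (\<And>w. fin (H w)) \<Longrightarrow> fin G \<Longrightarrow> fmul (C H) G = C (\<lambda>w. fmul (H w) G)"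
    and Cmul_r: "\<And>H G. (\<And>w. fin (H w)) \<Longrightarrow> fin G \<Longrightarrow> fmul G (C H) = C (\<lambda>w. fmul G (H w))"
  shows "fmul (P (take p (xs @ z # ys))) (Q (drop p (xs @ z # ys))) \<approx>
         C (\<lambda>w. fmul (P (take p (xs @ w # ys))) (Q (drop p (xs @ w # ys))))"
proof -
  have fin1: "fin (P w)" if "length w = p" for w using P that by (simp add: multilinear_def)
  have fin2: "fin (Q w)" if "length w = q" for w using Q that by (simp add: multilinear_def)
  show ?thesis
  proof (cases "length xs < p")
    case True
    define k where "k = p - length xs - 1"
    have pk: "p - length xs = Suc k" using True by (simp add: k_def)
    have t: "take p (xs @ w # ys) = xs @ w # take k ys" for w
      using True by (simp add: pk)
    have d: "drop p (xs @ w # ys) = drop k ys" for w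
      using True by (simp add: pk)
    have lk: "length (take k ys) = k" "length xs + k + 1 = p" "length (drop k ys) = q"
      using True len by (auto simp: k_def)
    have "fmul (P (xs @ z # take k ys)) (Q (drop k ys)) \<approx>
          fmul (C (\<lambda>w. P (xs @ w # take k ys))) (Q (drop k ys))"
      using lk by (intro teq_fmul r1 teq_refl fin1 fin2 Cfin) auto
    also have "\<dots> = C (\<lambda>w. fmul (P (xs @ w # take k ys)) (Q (drop k ys)))"
      using lk by (intro Cmul_l fin1 fin2) auto
    finally show ?thesis unfolding t d .
  next
    case False
    have t: "take p (xs @ w # ys) = take p xs" for w using False by simp
    have d: "drop p (xs @ w # ys) = drop p xs @ w # ys" for w using False by simp
    have lk: "length (take p xs) = p" "length (drop p xs) + length ys + 1 = q"
      using False len by auto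
    have "fmul (P (take p xs)) (Q (drop p xs @ z # ys)) \<approx>
          fmul (P (take p xs)) (C (\<lambda>w. Q (drop p xs @ w # ys)))"
      using lk by (intro teq_fmul r2 teq_refl fin1 fin2 Cfin) auto
    also have "\<dots> = C (\<lambda>w. fmul (P (take p xs)) (Q (drop p xs @ w # ys)))"
      using lk by (intro Cmul_r fin1 fin2) auto
    finally show ?thesis unfolding t d .
  qed
qed

lemma multilinear_prod:
  assumes P1: "multilinear p P1" and P2: "multilinear q P2"
  shows "multilinear (p + q) (\<lambda>vs. fmul (P1 (take p vs)) (P2 (drop p vs)))"
proof -
  note slot = fmul_take_drop_slot[OF P1 P2]
  show ?thesis unfolding multilinear_def
  proof (intro allI conjI impI)
    fix xs ys :: "'c list" and x y :: 'c
    assume len: "length xs + length ys + 1 = p + q"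
    show "fmul (P1 (take p (xs @ (x + y) # ys))) (P2 (drop p (xs @ (x + y) # ys))) \<approx>
         fadd (fmul (P1 (take p (xs @ x # ys))) (P2 (drop p (xs @ x # ys))))
          (fmul (P1 (take p (xs @ y # ys))) (P2 (drop p (xs @ y # ys))))"
      using slot[OF len, of "x + y" "\<lambda>H. fadd (H x) (H y)"] P1 P2
      by (auto simp: multilinear_def fmul_fadd_left fmul_fadd_right)
  next
    fix xs ys :: "'c list" and a and x :: 'c
    assume len: "length xs + length ys + 1 = p + q"
    show "fmul (P1 (take p (xs @ scale a x # ys))) (P2 (drop p (xs @ scale a x # ys))) \<approx>
          fsmult a (fmul (P1 (take p (xs @ x # ys))) (P2 (drop p (xs @ x # ys))))"
      using slot[OF len, of "scale a x" "\<lambda>H. fsmult a (H x)"] P1 P2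
      by (auto simp: multilinear_def fmul_fsmult_left fmul_fsmult_right)
  next
    fix ws :: "'c list" assume "length ws = p + q"
    then show "fin (fmul (P1 (take p ws)) (P2 (drop p ws)))"
      using P1 P2 by (intro fin_fmul) (auto simp: multilinear_def)
  qed
qed

lemma multilinear_flin:
  assumes "fin g" "\<And>b. g b \<noteq> 0 \<Longrightarrow> multilinear N (Theta b)"
  shows "multilinear N (\<lambda>ws. flin g (\<lambda>b. Theta b ws))"
  unfolding multilinear_def
proof (intro allI conjI impI)
  fix xs ys :: "'c list" and x y :: 'c
  assume "length xs + length ys + 1 = N"
  then show "flin g (\<lambda>b. Theta b (xs @ (x + y) # ys)) \<approx>
        fadd (flin g (\<lambda>b. Theta b (xs @ x # ys))) (flin g (\<lambda>b. Theta b (xs @ y # ys)))"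
    unfolding flin_fadd_right[symmetric] using assms(2)
    by (intro teq_flin_right) (auto simp: multilinear_def)
next
  fix xs ys :: "'c list" and a and x :: 'c
  assume "length xs + length ys + 1 = N"
  then show "flin g (\<lambda>b. Theta b (xs @ scale a x # ys)) \<approx> fsmult a (flin g (\<lambda>b. Theta b (xs @ x # ys)))"
    unfolding flin_fsmult_right[symmetric] using assms(2)
    by (intro teq_flin_right) (auto simp: multilinear_def)
next
  fix ws :: "'c list" assume "length ws = N"
  then show "fin (flin g (\<lambda>b. Theta b ws))" using assms by (intro fin_flin) (auto simp: multilinear_def)
qed

lemma split_at_length:
  assumes "length bs = length xs + length ys + 1"
  obtains bs1 b bs2 where "bs = bs1 @ b # bs2" "length bs1 = length xs" "length bs2 = length ys"
proof -
  have "bs = take (length xs) bs @ bs ! length xs # drop (Suc (length xs)) bs"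
    using assms by (simp add: id_take_nth_drop)
  then show ?thesis using that[of "take (length xs) bs" "bs ! length xs" "drop (Suc (length xs)) bs"] assms
    by simp
qed

lemma multilinear_map2_right:
  assumes ml_add: "\<And>x y b. m (x + y) b = m x b + m y b"
    and ml_sc: "\<And>a x b. m (scale a x) b = scale a (m x b)"
    and len: "length bs = N"
  shows "multilinear N (\<lambda>ws. basis (map2 m ws bs))"
  unfolding multilinear_def
proof (intro allI conjI impI)
  fix xs ys :: "'c list" and x y :: 'c
  assume l: "length xs + length ys + 1 = N"
  then obtain bs1 b bs2 where b: "bs = bs1 @ b # bs2" "length bs1 = length xs" "length bs2 = length ys"
    using split_at_length len by metis
  have eq: "map2 m (xs @ z # ys) bs = map2 m xs bs1 @ m z b # map2 m ys bs2" for z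
    using b by simp
  show "basis (map2 m (xs @ (x + y) # ys) bs) \<approx>
        fadd (basis (map2 m (xs @ x # ys) bs)) (basis (map2 m (xs @ y # ys) bs))"
    unfolding eq ml_add teq_def by (rule mlrel.rel_add)
next
  fix xs ys :: "'c list" and a and x :: 'c
  assume l: "length xs + length ys + 1 = N"
  then obtain bs1 b bs2 where b: "bs = bs1 @ b # bs2" "length bs1 = length xs" "length bs2 = length ys"
    using split_at_length len by metis
  have eq: "map2 m (xs @ z # ys) bs = map2 m xs bs1 @ m z b # map2 m ys bs2" for z
    using b by simp
  show "basis (map2 m (xs @ scale a x # ys) bs) \<approx> fsmult a (basis (map2 m (xs @ x # ys) bs))"
    unfolding eq ml_sc teq_def by (rule mlrel.rel_smult)
qed simp

lemma multilinear_map2_left: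
  assumes ml_add: "\<And>x y b. m b (x + y) = m b x + m b y"
    and ml_sc: "\<And>a x b. m b (scale a x) = scale a (m b x)"
    and len: "length bs = N"
  shows "multilinear N (\<lambda>ws. basis (map2 m bs ws))"
  unfolding multilinear_def
proof (intro allI conjI impI)
  fix xs ys :: "'c list" and x y :: 'c
  assume l: "length xs + length ys + 1 = N"
  then obtain bs1 b bs2 where b: "bs = bs1 @ b # bs2" "length bs1 = length xs" "length bs2 = length ys"
    using split_at_length len by metis
  have eq: "map2 m bs (xs @ z # ys) = map2 m bs1 xs @ m b z # map2 m bs2 ys" for z
    using b by simp
  show "basis (map2 m bs (xs @ (x + y) # ys)) \<approx>
        fadd (basis (map2 m bs (xs @ x # ys))) (basis (map2 m bs (xs @ y # ys)))"
    unfolding eq ml_add teq_def by (rule mlrel.rel_add)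
next
  fix xs ys :: "'c list" and a and x :: 'c
  assume l: "length xs + length ys + 1 = N"
  then obtain bs1 b bs2 where b: "bs = bs1 @ b # bs2" "length bs1 = length xs" "length bs2 = length ys"
    using split_at_length len by metis
  have eq: "map2 m bs (xs @ z # ys) = map2 m bs1 xs @ m b z # map2 m bs2 ys" for z
    using b by simp
  show "basis (map2 m bs (xs @ scale a x # ys)) \<approx> fsmult a (basis (map2 m bs (xs @ x # ys)))"
    unfolding eq ml_sc teq_def by (rule mlrel.rel_smult)
qed simp

lemma teq_fzip_left:
  assumes ml_add: "\<And>x y b. m (x + y) b = m x b + m y b"
    and ml_sc: "\<And>a x b. m (scale a x) b = scale a (m x b)"
    and "f \<approx> f'" "fin f" "fin f'" "fin g" "homog N f" "homog N f'" "homog N g"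
  shows "fzip m f g \<approx> fzip m f' g"
  unfolding fzip_def
proof (rule teq_flin_left[of f f' N])
  show "multilinear N (\<lambda>xs. flin g (\<lambda>ys. basis (map2 m xs ys)))"
    by (rule multilinear_flin) (use assms in \<open>auto intro: multilinear_map2_right simp: homog_def\<close>)
qed (use assms in auto)

lemma fzip_swap: "fin f \<Longrightarrow> fin g \<Longrightarrow> fzip m f g = flin g (\<lambda>ys. flin f (\<lambda>xs. basis (map2 m xs ys)))"
  unfolding fzip_def by (rule flin_swap)

lemma teq_fzip_right:
  assumes ml_add: "\<And>x y b. m b (x + y) = m b x + m b y"
    and ml_sc: "\<And>a x b. m b (scale a x) = scale a (m b x)"
    and "g \<approx> g'" "fin g" "fin g'" "fin f" "homog N g" "homog N g'" "homog N f"
  shows "fzip m f g \<approx> fzip m f g'"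
  unfolding fzip_swap[OF assms(6,4)] fzip_swap[OF assms(6,5)]
proof (rule teq_flin_left[of g g' N])
  show "multilinear N (\<lambda>ys. flin f (\<lambda>xs. basis (map2 m xs ys)))"
    by (rule multilinear_flin) (use assms in \<open>auto intro: multilinear_map2_left simp: homog_def\<close>)
qed (use assms in auto)

lemma klinear_basis_single: "klinear (\<lambda>x. basis [x])"
  unfolding klinear_def teq_def using mlrel.rel_add[where xs="[]" and ys="[]"] mlrel.rel_smult[where xs="[]" and ys="[]"] by auto

lemma multilinear_fmul2:
  assumes "klinear F" "klinear G"
  shows "multilinear 2 (\<lambda>xs. fmul (F (xs ! 0)) (G (xs ! 1)))"
proof -
  have "multilinear (1 + 1) (\<lambda>vs. fmul ((\<lambda>ws. F (ws ! 0)) (take 1 vs)) ((\<lambda>ws. G (ws ! 0)) (drop 1 vs)))"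
    by (intro multilinear_prod multilinear_single assms)
  moreover have e: "(1::nat) + 1 = 2" by simp
  ultimately have h: "multilinear 2 (\<lambda>vs. fmul (F (take 1 vs ! 0)) (G (drop 1 vs ! 0)))" by (simp only:)
  show ?thesis
  proof (rule multilinear_cong[OF h])
    fix ws :: "'c list" assume "length ws = 2"
    then obtain a b where "ws = [a, b]" by (auto simp: numeral_2_eq_2 length_Suc_conv)
    then show "fmul (F (ws ! 0)) (G (ws ! 1)) = fmul (F (take 1 ws ! 0)) (G (drop 1 ws ! 0))" by simp
  qed
qed

lemma multilinear_fmul3:
  assumes "klinear F" "klinear G" "klinear H"
  shows "multilinear 3 (\<lambda>xs. fmul (fmul (F (xs ! 0)) (G (xs ! 1))) (H (xs ! 2)))"
proof -
  have "multilinear (2 + 1) (\<lambda>vs. fmul ((\<lambda>xs. fmul (F (xs ! 0)) (G (xs ! 1))) (take 2 vs)) ((\<lambda>ws. H (ws ! 0)) (drop 2 vs)))"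
    by (intro multilinear_prod multilinear_single multilinear_fmul2 assms)
  moreover have e: "(2::nat) + 1 = 3" by simp
  ultimately have h: "multilinear 3 (\<lambda>vs. fmul (fmul (F (take 2 vs ! 0)) (G (take 2 vs ! 1))) (H (drop 2 vs ! 0)))"
    by (simp only:)
  show ?thesis
  proof (rule multilinear_cong[OF h])
    fix ws :: "'c list" assume "length ws = 3"
    then obtain a b c where "ws = [a, b, c]" by (auto simp: numeral_3_eq_3 length_Suc_conv)
    then show "fmul (fmul (F (ws ! 0)) (G (ws ! 1))) (H (ws ! 2)) =
      fmul (fmul (F (take 2 ws ! 0)) (G (take 2 ws ! 1))) (H (drop 2 ws ! 0))" by simp
  qed
qed

lemma klinear_teq_cong:
  assumes F: "klinear F" and FG: "\<And>c. F c \<approx> G c" and G: "\<And>c. fin (G c)"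
  shows "klinear G"
  unfolding klinear_def
proof (intro conjI allI)
  fix x y
  have "G (x + y) \<approx> F (x + y)" by (rule teq_sym[OF FG])
  also have "\<dots> \<approx> fadd (F x) (F y)" using F by (simp add: klinear_def)
  also have "\<dots> \<approx> fadd (G x) (G y)" by (intro teq_fadd FG)
  finally show "G (x + y) \<approx> fadd (G x) (G y)" .
next
  fix a x
  have "G (scale a x) \<approx> F (scale a x)" by (rule teq_sym[OF FG])
  also have "\<dots> \<approx> fsmult a (F x)" using F by (simp add: klinear_def)
  also have "\<dots> \<approx> fsmult a (G x)" by (intro teq_fsmult FG)
  finally show "G (scale a x) \<approx> fsmult a (G x)" .
qed (rule G)

lemma fadd_neg_fsub: "fadd f (fsmult (-1) g) = fsub f (g :: ('c,'k::comm_ring_1) fm)"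
  by (simp add: fadd_def fsmult_def fsub_def)

lemma mlrel_teq: "f \<in> MLR \<Longrightarrow> g \<in> MLR \<Longrightarrow> f \<approx> g"
  by (simp add: teq_def mlrel_sub)

end

declare fin_fmul[simp] fin_fzip[simp]

lemma flin_fmul_basis_left:
  fixes F :: "('c,'k::comm_ring_1) fm"
  shows "fin F \<Longrightarrow> flin (fmul (basis a) F) Theta = flin F (\<lambda>w. Theta (a @ w))"
  by (simp add: flin_fmul)

lemma flin_fmul_basis_right:
  fixes F :: "('c,'k::comm_ring_1) fm"
  shows "fin F \<Longrightarrow> flin (fmul F (basis b)) Theta = flin F (\<lambda>w. Theta (w @ b))"
  by (simp add: flin_fmul)

text \<open>On a word of length j + 1 + k, apply_at j G is id^j \<otimes> G \<otimes> id^k.\<close>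
abbreviation apply_at :: "nat \<Rightarrow> ('c \<Rightarrow> ('c,'k::comm_ring_1) fm) \<Rightarrow> 'c list \<Rightarrow> ('c,'k) fm" where
  "apply_at j G \<equiv> (\<lambda>vs. fmul (fmul (basis (take j vs)) (G (vs ! j))) (basis (drop (Suc j) vs)))"

lemma homog_apply_at:
  assumes "length vs = m" "j < m" "\<And>z. fin (G z)" "\<And>z. homog n (G z)" "N = j + n + (m - Suc j)"
  shows "homog N (apply_at j G vs)"
  using assms by (intro homog_fmul' homog_basis fin_fmul fin_basis) auto

lemma flin_fmul_basis_apply_at_0:
  assumes "fin F" "fin (G x)"
  shows "flin (fmul (basis [x]) F) (apply_at 0 G) = fmul (G x) F"
proof -
  have "flin (fmul (basis [x]) F) (apply_at 0 G) = flin F (\<lambda>w. fmul (G x) (basis w))"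
    using assms by (simp add: flin_fmul_basis_left)
  also have "\<dots> = fmul (G x) (flin F basis)"
    using assms by (intro fmul_flin_right[symmetric]) auto
  finally show ?thesis using assms by (simp add: flin_id)
qed

lemma flin_fmul_basis_apply_at_Suc:
  assumes "fin F" "\<And>z. fin (G z)"
  shows "flin (fmul (basis [x]) F) (apply_at (Suc j) G) = fmul (basis [x]) (flin F (apply_at j G))"
proof -
  have cons: "fmul (fmul (basis (x # t)) g) b = fmul (basis [x]) (fmul (fmul (basis t) g) b)"
    if "fin g" "fin b" for t g b
  proof -
    have eq: "basis (x # t) = fmul (basis [x]) (basis t)" by simp
    show ?thesis using that by (simp only: eq fmul_assoc fin_fmul fin_basis)
  qed
  have "flin (fmul (basis [x]) F) (apply_at (Suc j) G) = flin F (\<lambda>w. fmul (basis [x]) (apply_at j G w))"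
    using assms by (simp add: flin_fmul_basis_left cons del: fmul_basis_basis)
  also have "\<dots> = fmul (basis [x]) (flin F (apply_at j G))"
    using assms by (intro fmul_flin_right[symmetric]) auto
  finally show ?thesis .
qed

lemma length2_cases: "length ws = 2 \<Longrightarrow> (\<And>a b. ws = [a, b] \<Longrightarrow> P) \<Longrightarrow> P"
  by (auto simp: numeral_2_eq_2 length_Suc_conv)

lemma nat012_induct[case_names zero one suc2]:
  assumes "P 0" "P (Suc 0)" "\<And>k. P (Suc k) \<Longrightarrow> P (Suc (Suc k))"
  shows "P n"
proof (induction n rule: less_induct)
  case (less n) then show ?case using assms
  proof (cases n)
    case (Suc m) then show ?thesis using less assms by (cases m) auto
  qed simp
qed

section \<open>The iterated coproduct\<close>

locale bialgebra_struct =
  fixes scale :: "'k::comm_ring_1 \<Rightarrow> 'c::ab_group_add \<Rightarrow> 'c"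
    and mult :: "'c \<Rightarrow> 'c \<Rightarrow> 'c" and u :: 'c
    and Delta :: "'c \<Rightarrow> ('c, 'k) fm" and eps :: "'c \<Rightarrow> 'k"
  assumes bialg: "bialgebra scale mult u Delta eps"
begin

abbreviation teqB (infix "\<approx>" 50) where "f \<approx> g \<equiv> teq scale f g"
abbreviation "D \<equiv> iterD Delta eps"

lemma mult_add_l: "mult (x + y) z = mult x z + mult y z" using bialg by (simp add: bialgebra_def)
lemma mult_add_r: "mult x (y + z) = mult x y + mult x z" using bialg by (simp add: bialgebra_def)
lemma mult_sc_l: "mult (scale a x) y = scale a (mult x y)" using bialg by (simp add: bialgebra_def)
lemma mult_sc_r: "mult x (scale a y) = scale a (mult x y)" using bialg by (simp add: bialgebra_def)
lemma mult_assoc: "mult (mult x y) z = mult x (mult y z)" using bialg by (simp add: bialgebra_def)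
lemma unit_l[simp]: "mult u x = x" using bialg by (simp add: bialgebra_def)
lemma unit_r[simp]: "mult x u = x" using bialg by (simp add: bialgebra_def)
lemma Delta_hom: "hom_deg 2 (Delta c)" using bialg by (simp add: bialgebra_def)
lemma Delta_fin[simp]: "fin (Delta c)" using Delta_hom by (simp add: hom_deg_iff)
lemma Delta_homog[simp]: "homog 2 (Delta c)" using Delta_hom by (simp add: hom_deg_iff)
lemma Delta_add: "Delta (x + y) \<approx> fadd (Delta x) (Delta y)" using bialg by (simp add: bialgebra_def)
lemma Delta_sc: "Delta (scale a x) \<approx> fsmult a (Delta x)" using bialg by (simp add: bialgebra_def)
lemma eps_add: "eps (x + y) = eps x + eps y" using bialg by (simp add: bialgebra_def)
lemma eps_sc: "eps (scale a x) = a * eps x" using bialg by (simp add: bialgebra_def)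
lemma coassoc: "flin (Delta c) (\<lambda>xs. fmul (Delta (xs ! 0)) (basis [xs ! 1])) \<approx>
                    flin (Delta c) (\<lambda>xs. fmul (basis [xs ! 0]) (Delta (xs ! 1)))"
  using bialg by (simp add: bialgebra_def)
lemma counit_l: "flin (Delta c) (\<lambda>xs. fsmult (eps (xs ! 0)) (basis [xs ! 1])) \<approx> basis [c]"
  using bialg by (simp add: bialgebra_def)
lemma counit_r: "flin (Delta c) (\<lambda>xs. fsmult (eps (xs ! 1)) (basis [xs ! 0])) \<approx> basis [c]"
  using bialg by (simp add: bialgebra_def)
lemma Delta_mult: "Delta (mult x y) \<approx> fzip mult (Delta x) (Delta y)"
  using bialg by (simp add: bialgebra_def)
lemma Delta_u: "Delta u \<approx> basis [u, u]" using bialg by (simp add: bialgebra_def)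
lemma eps_mult: "eps (mult x y) = eps x * eps y" using bialg by (simp add: bialgebra_def)
lemma eps_u: "eps u = 1" using bialg by (simp add: bialgebra_def)

lemma Delta_supp: "Delta c xs \<noteq> 0 \<Longrightarrow> length xs = 2"
  using Delta_homog by (simp add: homog_def)

lemma iterD_hom: "fin (D n c) \<and> homog n (D n c)"
proof (induction n arbitrary: c rule: nat012_induct)
  case zero then show ?case by (auto intro: homog_basis)
next
  case one then show ?case by (auto intro: homog_basis)
next
  case (suc2 k)
  have "homog (1 + Suc k) (fmul (basis [xs ! 0]) (D (Suc k) (xs ! 1)))" for xs
    using suc2 by (intro homog_fmul homog_basis) auto
  then show ?case using suc2 by (auto intro!: fin_flin fin_fmul homog_flin)
qed

lemma iterD_fin[simp]: "fin (D n c)" using iterD_hom by blast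
lemma iterD_homog[simp]: "homog n (D n c)" using iterD_hom by blast

lemma klinear_flin_Delta:
  assumes P: "multilinear scale 2 Psi"
  shows "klinear scale (\<lambda>c. flin (Delta c) Psi)"
  unfolding klinear_def
proof (intro allI conjI)
  fix x y
  have "flin (Delta (x + y)) Psi \<approx> flin (fadd (Delta x) (Delta y)) Psi"
    by (rule teq_flin_left[OF Delta_add _ _ _ _ P]) auto
  also have "\<dots> = fadd (flin (Delta x) Psi) (flin (Delta y) Psi)" by (simp add: flin_fadd)
  finally show "flin (Delta (x + y)) Psi \<approx> fadd (flin (Delta x) Psi) (flin (Delta y) Psi)" .
next
  fix a x
  have "flin (Delta (scale a x)) Psi \<approx> flin (fsmult a (Delta x)) Psi"
    by (rule teq_flin_left[OF Delta_sc _ _ _ _ P]) auto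
  also have "\<dots> = fsmult a (flin (Delta x) Psi)" by (simp add: flin_fsmult)
  finally show "flin (Delta (scale a x)) Psi \<approx> fsmult a (flin (Delta x) Psi)" .
next
  fix x
  show "fin (flin (Delta x) Psi)"
    using P by (intro fin_flin) (auto dest: Delta_supp simp: multilinear_def)
qed

lemma klinear_iterD: "klinear scale (D n)"
proof (induction n rule: nat012_induct)
  case zero
  show ?case unfolding klinear_def
    by (auto simp: eps_add eps_sc fsmult_def fadd_def distrib_right mult.assoc
         simp del: fin_fsmult intro!: fin_fsmult[unfolded fsmult_def])
next
  case one
  show ?case using klinear_basis_single by simp
next
  case (suc2 k)
  have "multilinear scale 2 (\<lambda>xs. fmul (basis [xs ! 0]) (D (Suc k) (xs ! 1)))"
    by (rule multilinear_fmul2[OF klinear_basis_single suc2])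
  from klinear_flin_Delta[OF this] show ?case by simp
qed

lemma iterD_single: "multilinear scale 1 (\<lambda>w. D n (w ! 0))"
  by (rule multilinear_single[OF klinear_iterD])

lemma fin_flin_Delta[intro]: "(\<And>xs. length xs = 2 \<Longrightarrow> fin (Psi xs)) \<Longrightarrow> fin (flin (Delta c) Psi)"
  by (intro fin_flin) (auto dest: Delta_supp)

lemma homog_flin_Delta[intro]: "(\<And>xs. length xs = 2 \<Longrightarrow> homog n (Psi xs)) \<Longrightarrow> homog n (flin (Delta c) Psi)"
  by (intro homog_flin) (auto dest: Delta_supp)

lemma flin_coassoc:
  assumes T: "multilinear scale 3 T"
  shows "flin (flin (Delta c) (\<lambda>xs. fmul (basis [xs ! 0]) (Delta (xs ! 1)))) T \<approx>
         flin (flin (Delta c) (\<lambda>xs. fmul (Delta (xs ! 0)) (basis [xs ! 1]))) T"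
proof (rule teq_flin_left[OF teq_sym[OF coassoc] _ _ _ _ T])
  show "homog 3 (flin (Delta c) (\<lambda>xs. fmul (basis [xs ! 0]) (Delta (xs ! 1))))"
    by (rule homog_flin_Delta, rule homog_fmul'[where p=1 and q=2]) (auto intro: homog_basis)
  show "homog 3 (flin (Delta c) (\<lambda>xs. fmul (Delta (xs ! 0)) (basis [xs ! 1])))"
    by (rule homog_flin_Delta, rule homog_fmul'[where p=2 and q=1]) (auto intro: homog_basis)
qed auto

lemma fmul_basis_flin_Delta:
  assumes "\<And>z. fin (A z)" "\<And>z. fin (B z)"
  shows "fmul (basis [x]) (flin (Delta y) (\<lambda>ys. fmul (A (ys ! 0)) (B (ys ! 1)))) =
         flin (fmul (basis [x]) (Delta y)) (\<lambda>zs. fmul (fmul (basis [zs ! 0]) (A (zs ! 1))) (B (zs ! 2)))"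
proof -
  have "fmul (basis [x]) (flin (Delta y) (\<lambda>ys. fmul (A (ys ! 0)) (B (ys ! 1))))
      = flin (Delta y) (\<lambda>ys. fmul (basis [x]) (fmul (A (ys ! 0)) (B (ys ! 1))))"
    by (rule fmul_flin_right) (auto simp: assms)
  also have "\<dots> = flin (Delta y) (\<lambda>w. fmul (fmul (basis [([x] @ w) ! 0]) (A (([x] @ w) ! 1))) (B (([x] @ w) ! 2)))"
    by (rule flin_cong) (auto dest!: Delta_supp elim!: length2_cases simp: fmul_assoc assms)
  finally show ?thesis by (simp add: flin_fmul_basis_left)
qed

lemma flin_fmul_Delta_basis:
  assumes "\<And>z. fin (A z)" "\<And>z. fin (B z)"
  shows "flin (fmul (Delta x) (basis [y])) (\<lambda>zs. fmul (fmul (basis [zs ! 0]) (A (zs ! 1))) (B (zs ! 2))) =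
         fmul (flin (Delta x) (\<lambda>w. fmul (basis [w ! 0]) (A (w ! 1)))) (B y)"
proof -
  have "flin (fmul (Delta x) (basis [y])) (\<lambda>zs. fmul (fmul (basis [zs ! 0]) (A (zs ! 1))) (B (zs ! 2)))
      = flin (Delta x) (\<lambda>w. fmul (fmul (basis [w ! 0]) (A (w ! 1))) (B y))"
    by (simp add: flin_fmul_basis_right cong: flin_cong) (auto intro!: flin_cong dest!: Delta_supp elim!: length2_cases)
  also have "\<dots> = fmul (flin (Delta x) (\<lambda>w. fmul (basis [w ! 0]) (A (w ! 1)))) (B y)"
    by (rule fmul_flin_left[symmetric]) (auto simp: assms)
  finally show ?thesis .
qed

text \<open>The case p = 0 is the left counit law, the case p = 1, q = 0 the right one, and
the induction step is coassociativity.\<close>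
lemma iterD_split: "D (p + q) c \<approx> flin (Delta c) (\<lambda>xs. fmul (D p (xs ! 0)) (D q (xs ! 1)))"
proof (induction p arbitrary: q c rule: nat012_induct)
  case zero
  have "D q c = flin (basis [c]) (\<lambda>w. D q (w ! 0))" by simp
  also have "\<dots> \<approx> flin (flin (Delta c) (\<lambda>xs. fsmult (eps (xs ! 0)) (basis [xs ! 1]))) (\<lambda>w. D q (w ! 0))"
    by (rule teq_flin_left[OF teq_sym[OF counit_l] _ _ _ _ iterD_single])
       (auto intro!: homog_flin_Delta homog_fsmult homog_basis)
  also have "\<dots> = flin (Delta c) (\<lambda>xs. fmul (D 0 (xs ! 0)) (D q (xs ! 1)))"
    by (simp add: flin_assoc flin_fsmult fmul_fsmult_left)
  finally show ?case by simp
next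
  case one
  show ?case
  proof (cases q)
    case 0
    have "D (Suc 0 + q) c = basis [c]" using 0 by simp
    also have "\<dots> \<approx> flin (Delta c) (\<lambda>xs. fsmult (eps (xs ! 1)) (basis [xs ! 0]))"
      by (rule teq_sym[OF counit_r])
    also have "\<dots> = flin (Delta c) (\<lambda>xs. fmul (D (Suc 0) (xs ! 0)) (D q (xs ! 1)))"
      using 0 by (simp add: fmul_fsmult_right)
    finally show ?thesis .
  qed simp
next
  case (suc2 p)
  let ?T = "\<lambda>zs. fmul (fmul (basis [zs ! 0]) (D (Suc p) (zs ! 1))) (D q (zs ! 2))"
  have "D (Suc (Suc p) + q) c = flin (Delta c) (\<lambda>xs. fmul (basis [xs ! 0]) (D (Suc p + q) (xs ! 1)))"
    by simp
  also have "\<dots> \<approx> flin (Delta c) (\<lambda>xs. fmul (basis [xs ! 0])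
        (flin (Delta (xs ! 1)) (\<lambda>ys. fmul (D (Suc p) (ys ! 0)) (D q (ys ! 1)))))"
    by (intro teq_flin_right teq_fmul suc2 teq_refl) (auto intro!: fin_flin_Delta fin_fmul)
  also have "\<dots> = flin (Delta c) (\<lambda>xs. flin (fmul (basis [xs ! 0]) (Delta (xs ! 1))) ?T)"
    by (intro flin_cong fmul_basis_flin_Delta) auto
  also have "\<dots> = flin (flin (Delta c) (\<lambda>xs. fmul (basis [xs ! 0]) (Delta (xs ! 1)))) ?T"
    by (rule flin_assoc[symmetric]) auto
  also have "\<dots> \<approx> flin (flin (Delta c) (\<lambda>xs. fmul (Delta (xs ! 0)) (basis [xs ! 1]))) ?T"
    by (rule flin_coassoc[OF multilinear_fmul3[OF klinear_basis_single klinear_iterD klinear_iterD]])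
  also have "\<dots> = flin (Delta c) (\<lambda>xs. flin (fmul (Delta (xs ! 0)) (basis [xs ! 1])) ?T)"
    by (rule flin_assoc) auto
  also have "\<dots> = flin (Delta c) (\<lambda>xs. fmul (D (Suc (Suc p)) (xs ! 0)) (D q (xs ! 1)))"
    using flin_fmul_Delta_basis[of "D (Suc p)" "D q"] by (intro flin_cong) simp
  finally show ?case .
qed

lemma multilinear_apply_at:
  assumes G: "klinear scale G"
  shows "multilinear scale (j + 1 + k) (apply_at j G)"
proof -
  have h1: "multilinear scale (j + 1) (\<lambda>ws. fmul (basis (take j ws)) ((\<lambda>w. G (w ! 0)) (drop j ws)))"
    by (intro multilinear_prod multilinear_basis multilinear_single G)
  have "multilinear scale (j + 1 + k) (\<lambda>vs. fmul ((\<lambda>ws. fmul (basis (take j ws)) ((\<lambda>w. G (w ! 0)) (drop j ws))) (take (j + 1) vs)) (basis (drop (j + 1) vs)))"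
    by (intro multilinear_prod h1 multilinear_basis)
  then show ?thesis
    by (rule multilinear_cong) (simp add: min_def)
qed

lemma flin_Delta_apply_at:
  assumes "klinear scale G" "j \<le> m"
  shows "flin (flin (Delta c) (\<lambda>xs. fmul (basis [xs ! 0]) (D m (xs ! 1)))) (apply_at j G) \<approx>
         flin (D (Suc m) c) (apply_at j G)"
proof (rule teq_flin_left)
  show "flin (Delta c) (\<lambda>xs. fmul (basis [xs ! 0]) (D m (xs ! 1))) \<approx> D (Suc m) c"
    using teq_sym[OF iterD_split[of 1 m c]] by simp
  show "homog (Suc m) (flin (Delta c) (\<lambda>xs. fmul (basis [xs ! 0]) (D m (xs ! 1))))"
    by (intro homog_flin_Delta homog_fmul'[where p=1 and q=m]) (auto intro: homog_basis)
  have "j + 1 + (m - j) = Suc m" using assms(2) by simp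
  then show "multilinear scale (Suc m) (apply_at j G)"
    using multilinear_apply_at[OF assms(1), of j "m - j"] by simp
qed auto

lemma iterD_coassoc: "D (j + n + k) c \<approx> flin (D (j + 1 + k) c) (apply_at j (D n))"
proof (induction j arbitrary: c)
  case 0
  have "D (0 + n + k) c \<approx> flin (Delta c) (\<lambda>xs. fmul (D n (xs ! 0)) (D k (xs ! 1)))"
    using iterD_split by simp
  also have "\<dots> = flin (Delta c) (\<lambda>xs. flin (fmul (basis [xs ! 0]) (D k (xs ! 1))) (apply_at 0 (D n)))"
    by (intro flin_cong flin_fmul_basis_apply_at_0[symmetric]) auto
  also have "\<dots> = flin (flin (Delta c) (\<lambda>xs. fmul (basis [xs ! 0]) (D k (xs ! 1)))) (apply_at 0 (D n))"
    by (rule flin_assoc[symmetric]) auto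
  also have "\<dots> \<approx> flin (D (0 + 1 + k) c) (apply_at 0 (D n))"
    using flin_Delta_apply_at[OF klinear_iterD, of 0 k] by simp
  finally show ?case .
next
  case (Suc j)
  have "D (Suc j + n + k) c \<approx> flin (Delta c) (\<lambda>xs. fmul (D 1 (xs ! 0)) (D (j + n + k) (xs ! 1)))"
    using iterD_split[of 1 "j + n + k"] by simp
  also have "\<dots> \<approx> flin (Delta c) (\<lambda>xs. fmul (basis [xs ! 0]) (flin (D (j + 1 + k) (xs ! 1)) (apply_at j (D n))))"
    by (intro teq_flin_right teq_fmul Suc teq_refl) (auto intro!: fin_flin)
  also have "\<dots> = flin (Delta c) (\<lambda>xs. flin (fmul (basis [xs ! 0]) (D (j + 1 + k) (xs ! 1))) (apply_at (Suc j) (D n)))"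
    by (intro flin_cong flin_fmul_basis_apply_at_Suc[symmetric]) auto
  also have "\<dots> = flin (flin (Delta c) (\<lambda>xs. fmul (basis [xs ! 0]) (D (j + 1 + k) (xs ! 1)))) (apply_at (Suc j) (D n))"
    by (rule flin_assoc[symmetric]) auto
  also have "\<dots> \<approx> flin (D (Suc j + 1 + k) c) (apply_at (Suc j) (D n))"
    using flin_Delta_apply_at[OF klinear_iterD, of "Suc j" "j + 1 + k"] by simp
  finally show ?case .
qed

lemma flin_fzip:
  fixes f g :: "('c,'k) fm"
  assumes "fin f" "fin g"
  shows "flin (fzip m f g) Theta = flin f (\<lambda>a. flin g (\<lambda>b. Theta (map2 m a b)))"
  using assms by (simp add: fzip_def flin_assoc fin_flin)

lemma iterD_two: "D 2 c = Delta c"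
proof -
  have "D 2 c = flin (Delta c) (\<lambda>xs. fmul (basis [xs ! 0]) (basis [xs ! 1]))"
    by (simp add: numeral_2_eq_2)
  also have "\<dots> = flin (Delta c) basis"
    by (rule flin_cong) (auto dest!: Delta_supp elim!: length2_cases)
  finally show ?thesis by (simp add: flin_id)
qed

lemma fzip_basis_single: "fzip mult (basis [a]) (basis [b]) = basis [mult a b]"
  by (simp add: fzip_basis_left)

lemma iterD_mult: "D n (mult v a) \<approx> fzip mult (D n v) (D n a)"
proof (induction n arbitrary: v a rule: nat012_induct)
  case zero
  have "fzip mult (fsmult (eps v) (basis [])) (fsmult (eps a) (basis [])) = fsmult (eps a) (fsmult (eps v) (basis []))"
    by (simp add: fzip_fsmult_left fzip_fsmult_right fzip_basis_left)
  also have "\<dots> = fsmult (eps (mult v a)) (basis [])" by (simp add: fsmult_def eps_mult mult.commute mult.left_commute)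
  finally show ?case by simp
next
  case one
  show ?case by (simp add: fzip_basis_left)
next
  case (suc2 k)
  let ?P = "\<lambda>xs. fmul (basis [xs ! 0]) (D (Suc k) (xs ! 1))"
  have ML2: "multilinear scale 2 ?P" by (rule multilinear_fmul2[OF klinear_basis_single klinear_iterD])
  have "D (Suc (Suc k)) (mult v a) = flin (Delta (mult v a)) ?P" by simp
  also have "\<dots> \<approx> flin (fzip mult (Delta v) (Delta a)) ?P"
    by (rule teq_flin_left[OF Delta_mult _ _ _ _ ML2]) auto
  also have "\<dots> = flin (Delta v) (\<lambda>b. flin (Delta a) (\<lambda>c. ?P (map2 mult b c)))"
    by (simp add: flin_fzip)
  also have "\<dots> \<approx> flin (Delta v) (\<lambda>b. flin (Delta a) (\<lambda>c. fzip mult (?P b) (?P c)))"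
  proof (intro teq_flin_right)
    fix b c assume "Delta v b \<noteq> 0" "Delta a c \<noteq> 0"
    then obtain b0 b1 c0 c1 where bc: "b = [b0, b1]" "c = [c0, c1]"
      by (auto dest!: Delta_supp elim!: length2_cases)
    have "?P (map2 mult b c) = fmul (basis [mult b0 c0]) (D (Suc k) (mult b1 c1))" using bc by simp
    also have "\<dots> \<approx> fmul (basis [mult b0 c0]) (fzip mult (D (Suc k) b1) (D (Suc k) c1))"
      by (intro teq_fmul teq_refl suc2) auto
    also have "\<dots> = fzip mult (?P b) (?P c)"
      using bc by (simp add: fzip_fmul[where p=1] fzip_basis_single homog_basis)
    finally show "?P (map2 mult b c) \<approx> fzip mult (?P b) (?P c)" .
  qed
  also have "\<dots> = fzip mult (flin (Delta v) ?P) (flin (Delta a) ?P)"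
    by (subst fzip_flin_left) (auto simp: fzip_flin_right fin_flin)
  finally show ?case by simp
qed

lemma iterD_unit: "D n u \<approx> basis (replicate n u)"
proof (induction n rule: nat012_induct)
  case zero
  show ?case by (simp add: eps_u fsmult_def)
next
  case one
  show ?case by simp
next
  case (suc2 k)
  let ?P = "\<lambda>xs. fmul (basis [xs ! 0]) (D (Suc k) (xs ! 1))"
  have ML2: "multilinear scale 2 ?P" by (rule multilinear_fmul2[OF klinear_basis_single klinear_iterD])
  have "D (Suc (Suc k)) u = flin (Delta u) ?P" by simp
  also have "\<dots> \<approx> flin (basis [u, u]) ?P"
    by (rule teq_flin_left[OF Delta_u _ _ _ _ ML2]) (auto intro: homog_basis)
  also have "\<dots> = fmul (basis [u]) (D (Suc k) u)" by simp
  also have "\<dots> \<approx> fmul (basis [u]) (basis (replicate (Suc k) u))"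
    by (intro teq_fmul teq_refl suc2) auto
  also have "\<dots> = basis (replicate (Suc (Suc k)) u)" by simp
  finally show ?case .
qed

abbreviation "ext \<equiv> extmap mult Delta eps"

lemma ext_eq: "ext N x c = fzip mult (D N c) x" by (simp add: extmap_def)

lemma ext_fin[simp]: "fin x \<Longrightarrow> fin (ext N x c)" by (simp add: ext_eq)
lemma ext_homog: "homog N x \<Longrightarrow> homog N (ext N x c)" by (simp add: ext_eq homog_fzip)

lemma ext_fadd: "fin x \<Longrightarrow> fin y \<Longrightarrow> ext N (fadd x y) c = fadd (ext N x c) (ext N y c)"
  by (simp add: ext_eq fzip_fadd_right)
lemma ext_fsmult: "fin x \<Longrightarrow> ext N (fsmult a x) c = fsmult a (ext N x c)"
  by (simp add: ext_eq fzip_fsmult_right)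
lemma ext_fzero[simp]: "ext N fzero c = fzero"
  by (simp add: ext_eq fzip_def)
lemma ext_flin: "fin (x :: ('c,'k) fm) \<Longrightarrow> (\<And>as. x as \<noteq> 0 \<Longrightarrow> fin (Phi as)) \<Longrightarrow> ext N (flin x Phi) c = flin x (\<lambda>as. ext N (Phi as) c)"
  unfolding ext_eq by (rule fzip_flin_right)

lemma ext_teq: "x \<approx> y \<Longrightarrow> fin x \<Longrightarrow> fin y \<Longrightarrow> homog N x \<Longrightarrow> homog N y \<Longrightarrow> ext N x c \<approx> ext N y c"
  unfolding ext_eq by (rule teq_fzip_right[where m=mult, OF mult_add_r mult_sc_r]) auto

lemma ext_mlrel: "x \<in> mlrel scale \<Longrightarrow> homog N x \<Longrightarrow> ext N x c \<in> mlrel scale"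
proof -
  assume x: "x \<in> mlrel scale" "homog N x"
  have "ext N x c \<approx> ext N fzero c"
    using x mlrel_fin[OF x(1)] by (intro ext_teq) (auto simp: teq_zero_iff)
  then show ?thesis by (simp add: teq_zero_iff)
qed

lemma klinear_ext: "fin x \<Longrightarrow> homog N x \<Longrightarrow> klinear scale (ext N x)"
  unfolding klinear_def
proof (intro conjI allI)
  assume x: "fin x" "homog N x"
  fix a b
  have "ext N x (a + b) \<approx> fzip mult (fadd (D N a) (D N b)) x"
    unfolding ext_eq using klinear_iterD x
    by (intro teq_fzip_left[where m=mult, OF mult_add_l mult_sc_l]) (auto simp: klinear_def)
  also have "\<dots> = fadd (ext N x a) (ext N x b)" by (simp add: ext_eq fzip_fadd_left)
  finally show "ext N x (a + b) \<approx> fadd (ext N x a) (ext N x b)" .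
next
  assume x: "fin x" "homog N x"
  fix a b
  have "ext N x (scale a b) \<approx> fzip mult (fsmult a (D N b)) x"
    unfolding ext_eq using klinear_iterD x
    by (intro teq_fzip_left[where m=mult, OF mult_add_l mult_sc_l]) (auto simp: klinear_def)
  also have "\<dots> = fsmult a (ext N x b)" by (simp add: ext_eq fzip_fsmult_left)
  finally show "ext N x (scale a b) \<approx> fsmult a (ext N x b)" .
next
  assume x: "fin x" "homog N x"
  fix a show "fin (ext N x a)" using x by simp
qed

lemma map2_unit: "length ys = N \<Longrightarrow> map2 mult (replicate N u) ys = ys"
  by (induction ys arbitrary: N) (auto simp: Suc_length_conv)

lemma ext_eval_unit: "fin x \<Longrightarrow> homog N x \<Longrightarrow> ext N x u \<approx> x"
proof -
  assume x: "fin x" "homog N x"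
  have "ext N x u \<approx> fzip mult (basis (replicate N u)) x"
    unfolding ext_eq using x
    by (intro teq_fzip_left[where m=mult, OF mult_add_l mult_sc_l iterD_unit]) (auto intro: homog_basis)
  also have "\<dots> = flin x basis"
    unfolding fzip_basis_left using x by (intro flin_cong) (auto simp: homog_def map2_unit)
  also have "\<dots> = x" using x by (simp add: flin_id)
  finally show ?thesis .
qed

lemma ext_mu: "ext 2 (basis [u, u]) c = Delta c"
proof -
  have "ext 2 (basis [u, u]) c = flin (Delta c) (\<lambda>xs. basis (map2 mult xs [u, u]))"
    by (simp add: ext_eq iterD_two fzip_basis_right)
  also have "\<dots> = flin (Delta c) basis"
    by (rule flin_cong) (auto dest!: Delta_supp elim!: length2_cases)
  finally show ?thesis by (simp add: flin_id)
qed

lemma ext_e: "ext 0 (basis []) c = fsmult (eps c) (basis [])"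
  by (simp add: ext_eq fzip_fsmult_left fzip_basis_left)

section \<open>ext and partial compositions\<close>

lemma ocomp_alt: "1 \<le> i \<Longrightarrow> ocomp mult Delta eps i x y =
   flin x (\<lambda>as. flin y (\<lambda>bs. apply_at (i - 1) (\<lambda>a. fzip mult (D (length bs) a) (basis bs)) as))"
  by (simp add: ocomp_def)

lemma cecomp_alt: "1 \<le> i \<Longrightarrow> cecomp i F G c = flin (F c) (apply_at (i - 1) G)"
  by (simp add: cecomp_def)

lemma ocomp_hom:
  assumes "fin x" "homog m x" "fin y" "homog n y" "1 \<le> i" "i \<le> m"
  shows "fin (ocomp mult Delta eps i x y) \<and> homog (m + n - 1) (ocomp mult Delta eps i x y)"
proof
  show "fin (ocomp mult Delta eps i x y)"
    using assms by (simp add: ocomp_alt fin_flin)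
  show "homog (m + n - 1) (ocomp mult Delta eps i x y)"
    unfolding ocomp_alt[OF assms(5)]
  proof (intro homog_flin)
    fix as bs assume "x as \<noteq> 0" "y bs \<noteq> 0"
    then have l: "length as = m" "length bs = n" using assms by (auto simp: homog_def)
    show "homog (m + n - 1) (apply_at (i - 1) (\<lambda>a. fzip mult (D (length bs) a) (basis bs)) as)"
      by (rule homog_apply_at[where n=n and m=m]) (use l assms in \<open>auto intro: homog_fzip homog_basis\<close>)
  qed
qed

lemma cecomp_hom:
  assumes "fin (F c)" "homog m (F c)" "\<And>z. fin (G z)" "\<And>z. homog n (G z)" "1 \<le> i" "i \<le> m"
  shows "fin (cecomp i F G c) \<and> homog (m + n - 1) (cecomp i F G c)"
proof
  show "fin (cecomp i F G c)"
    using assms by (simp add: cecomp_alt fin_flin)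
  show "homog (m + n - 1) (cecomp i F G c)"
    unfolding cecomp_alt[OF assms(5)]
  proof (intro homog_flin)
    fix as assume "F c as \<noteq> 0"
    then have l: "length as = m" using assms by (auto simp: homog_def)
    show "homog (m + n - 1) (apply_at (i - 1) G as)"
      by (rule homog_apply_at[where n=n and m=m]) (use l assms in auto)
  qed
qed

lemma cecomp_teq_left:
  assumes "F c \<approx> F' c" "fin (F c)" "fin (F' c)" "homog m (F c)" "homog m (F' c)"
    "klinear scale G" "1 \<le> i" "i \<le> m"
  shows "cecomp i F G c \<approx> cecomp i F' G c"
proof -
  have e: "i - 1 + 1 + (m - i) = m" using assms by simp
  show ?thesis unfolding cecomp_alt[OF assms(7)]
    by (rule teq_flin_left[OF assms(1-5) multilinear_apply_at[OF assms(6), of "i - 1" "m - i", unfolded e]])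
qed

lemma cecomp_teq_right:
  assumes "\<And>z. G z \<approx> G' z" "\<And>z. fin (G z)" "\<And>z. fin (G' z)" "1 \<le> i"
  shows "cecomp i F G c \<approx> cecomp i F G' c"
  unfolding cecomp_alt[OF assms(4)]
  by (intro teq_flin_right teq_fmul teq_refl assms) (auto simp: assms)

lemma map2_take: "take j (map2 f xs ys) = map2 f (take j xs) (take j ys)"
  by (simp add: take_map take_zip)
lemma map2_drop: "drop j (map2 f xs ys) = map2 f (drop j xs) (drop j ys)"
  by (simp add: drop_map drop_zip)

lemma fzip_apply_at:
  assumes l: "length vs = m" "length as = m" "j < m" "length bs = n"
  shows "fzip mult (apply_at j (D n) vs) (apply_at j (\<lambda>a. fzip mult (D n a) (basis bs)) as) \<approx>
         apply_at j (ext n (basis bs)) (map2 mult vs as)"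
proof -
  let ?v = "vs ! j" and ?a = "as ! j"
  have homG: "homog n (fzip mult (D n a) (basis bs))" for a using l by (intro homog_fzip homog_basis) auto
  have "fzip mult (apply_at j (D n) vs) (apply_at j (\<lambda>a. fzip mult (D n a) (basis bs)) as) =
    fmul (fzip mult (fmul (basis (take j vs)) (D n ?v)) (fmul (basis (take j as)) (fzip mult (D n ?a) (basis bs))))
         (fzip mult (basis (drop (Suc j) vs)) (basis (drop (Suc j) as)))"
    by (rule fzip_fmul[where p="j + n"]) (use l homG in \<open>auto intro!: homog_fmul homog_basis\<close>)
  also have "\<dots> = fmul (fmul (basis (map2 mult (take j vs) (take j as))) (fzip mult (D n ?v) (fzip mult (D n ?a) (basis bs))))
         (basis (map2 mult (drop (Suc j) vs) (drop (Suc j) as)))"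
    by (subst fzip_fmul[where p=j]) (use l homG in \<open>auto simp: fzip_basis_left intro: homog_basis\<close>)
  also have "\<dots> = fmul (fmul (basis (map2 mult (take j vs) (take j as))) (fzip mult (fzip mult (D n ?v) (D n ?a)) (basis bs)))
         (basis (map2 mult (drop (Suc j) vs) (drop (Suc j) as)))"
    by (simp add: fzip_assoc mult_assoc)
  also have "\<dots> \<approx> fmul (fmul (basis (map2 mult (take j vs) (take j as))) (fzip mult (D n (mult ?v ?a)) (basis bs)))
         (basis (map2 mult (drop (Suc j) vs) (drop (Suc j) as)))"
    using l by (intro teq_fmul teq_refl teq_fzip_left[where m=mult, OF mult_add_l mult_sc_l teq_sym[OF iterD_mult]])
      (auto intro: homog_basis)
  also have "\<dots> = apply_at j (ext n (basis bs)) (map2 mult vs as)"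
    using l by (simp add: map2_take map2_drop ext_eq)
  finally show ?thesis .
qed

lemma ext_apply_at:
  assumes l: "length as = j + 1 + k" "length bs = n"
  shows "ext (j + n + k) (apply_at j (\<lambda>a. fzip mult (D n a) (basis bs)) as) c \<approx>
         flin (ext (j + 1 + k) (basis as) c) (apply_at j (ext n (basis bs)))"
proof -
  let ?G = "\<lambda>a. fzip mult (D n a) (basis bs)"
  let ?m = "j + 1 + k"
  have homG: "homog n (?G a)" for a using l by (intro homog_fzip homog_basis) auto
  have homP: "homog (j + n + k) (apply_at j ?G as)"
    by (rule homog_apply_at[where m="?m" and n=n]) (use l homG in auto)
  have homQ: "homog (j + n + k) (flin (D ?m c) (apply_at j (D n)))"
  proof (rule homog_flin)
    fix vs assume "D ?m c vs \<noteq> 0"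
    then have "length vs = ?m" using iterD_homog[of ?m c] by (simp add: homog_def)
    then show "homog (j + n + k) (apply_at j (D n) vs)"
      by (intro homog_apply_at[where m="?m" and n=n]) auto
  qed
  have "ext (j + n + k) (apply_at j ?G as) c = fzip mult (D (j + n + k) c) (apply_at j ?G as)" by (simp add: ext_eq)
  also have "\<dots> \<approx> fzip mult (flin (D ?m c) (apply_at j (D n))) (apply_at j ?G as)"
    by (rule teq_fzip_left[where m=mult, OF mult_add_l mult_sc_l iterD_coassoc]) (use homP homQ in \<open>auto intro!: fin_flin\<close>)
  also have "\<dots> = flin (D ?m c) (\<lambda>vs. fzip mult (apply_at j (D n) vs) (apply_at j ?G as))"
    by (rule fzip_flin_left) auto
  also have "\<dots> \<approx> flin (D ?m c) (\<lambda>vs. apply_at j (ext n (basis bs)) (map2 mult vs as))"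
  proof (rule teq_flin_right)
    fix vs assume "D ?m c vs \<noteq> 0"
    then have "length vs = ?m" using iterD_homog[of ?m c] by (simp add: homog_def)
    then show "fzip mult (apply_at j (D n) vs) (apply_at j ?G as) \<approx> apply_at j (ext n (basis bs)) (map2 mult vs as)"
      by (intro fzip_apply_at) (use l in auto)
  qed
  also have "\<dots> = flin (flin (D ?m c) (\<lambda>vs. basis (map2 mult vs as))) (apply_at j (ext n (basis bs)))"
    by (subst flin_assoc) auto
  also have "\<dots> = flin (ext ?m (basis as) c) (apply_at j (ext n (basis bs)))"
    by (simp add: ext_eq fzip_basis_right)
  finally show ?thesis .
qed

lemma apply_at_flin:
  fixes y :: "('c,'k) fm" and ws :: "'c list" and H :: "'c list \<Rightarrow> 'c \<Rightarrow> ('c,'k) fm"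
  assumes "fin y" "\<And>b z. fin (H b z)"
  shows "apply_at j (\<lambda>z. flin y (\<lambda>b. H b z)) ws = flin y (\<lambda>b. apply_at j (H b) ws)"
proof -
  have "fmul (basis (take j ws)) (flin y (\<lambda>b. H b (ws ! j))) = flin y (\<lambda>b. fmul (basis (take j ws)) (H b (ws ! j)))"
    by (rule fmul_flin_right) (use assms in auto)
  moreover have "fmul (flin y (\<lambda>b. fmul (basis (take j ws)) (H b (ws ! j)))) (basis (drop (Suc j) ws)) =
     flin y (\<lambda>b. fmul (fmul (basis (take j ws)) (H b (ws ! j))) (basis (drop (Suc j) ws)))"
    by (rule fmul_flin_left) (use assms in auto)
  ultimately show ?thesis by simp
qed

lemma ext_flin_basis:
  assumes "fin y" shows "ext n y z = flin y (\<lambda>b. ext n (basis b) z)"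
  using assms by (subst (1) flin_id[OF assms, symmetric]) (simp add: ext_flin)

lemma apply_at_ext:
  assumes "fin y"
  shows "apply_at j (ext n y) ws = flin y (\<lambda>b. apply_at j (ext n (basis b)) ws)"
proof -
  have "ext n y = (\<lambda>z. flin y (\<lambda>b. ext n (basis b) z))"
    by (intro HOL.ext ext_flin_basis assms)
  then have "apply_at j (ext n y) ws = apply_at j (\<lambda>z. flin y (\<lambda>b. ext n (basis b) z)) ws"
    by (simp only:)
  also have "\<dots> = flin y (\<lambda>b. apply_at j (ext n (basis b)) ws)"
    by (rule apply_at_flin) (use assms in auto)
  finally show ?thesis .
qed

lemma ext_ocomp:
  assumes x: "fin x" "homog (j + 1 + k) x" and y: "fin y" "homog n y"
  shows "ext (j + n + k) (ocomp mult Delta eps (Suc j) x y) c \<approx>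
         cecomp (Suc j) (ext (j + 1 + k) x) (ext n y) c"
proof -
  let ?m = "j + 1 + k" and ?N = "j + n + k"
  let ?G = "\<lambda>bs a. fzip mult (D n a) (basis bs)"
  have "ocomp mult Delta eps (Suc j) x y = flin x (\<lambda>as. flin y (\<lambda>bs. apply_at j (?G bs) as))"
    unfolding ocomp_alt[of "Suc j", simplified]
    by (intro flin_cong) (use y in \<open>auto simp: homog_def\<close>)
  hence "ext ?N (ocomp mult Delta eps (Suc j) x y) c = flin x (\<lambda>as. flin y (\<lambda>bs. ext ?N (apply_at j (?G bs) as) c))"
    using x y by (simp add: ext_flin fin_flin)
  also have "\<dots> \<approx> flin x (\<lambda>as. flin y (\<lambda>bs. flin (ext ?m (basis as) c) (apply_at j (ext n (basis bs)))))"
  proof (intro teq_flin_right)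
    fix as bs assume "x as \<noteq> 0" "y bs \<noteq> 0"
    then have "length as = ?m" "length bs = n" using x y by (auto simp: homog_def)
    then show "ext ?N (apply_at j (?G bs) as) c \<approx> flin (ext ?m (basis as) c) (apply_at j (ext n (basis bs)))"
      by (rule ext_apply_at)
  qed
  also have "\<dots> = flin x (\<lambda>as. flin (ext ?m (basis as) c) (\<lambda>ws. flin y (\<lambda>bs. apply_at j (ext n (basis bs)) ws)))"
    by (intro flin_cong flin_swap)
  also have "\<dots> = flin x (\<lambda>as. flin (ext ?m (basis as) c) (apply_at j (ext n y)))"
    using apply_at_ext[OF y(1)] by simp
  also have "\<dots> = flin (flin x (\<lambda>as. ext ?m (basis as) c)) (apply_at j (ext n y))"
    by (subst flin_assoc) (use x in auto)
  also have "\<dots> = flin (ext ?m x c) (apply_at j (ext n y))"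
    using x by (subst (2) flin_id[OF x(1), symmetric]) (simp add: ext_flin)
  also have "\<dots> = cecomp (Suc j) (ext ?m x) (ext n y) c"
    by (simp add: cecomp_alt)
  finally show ?thesis .
qed

abbreviation "OpC \<equiv> OC scale mult u Delta eps"
abbreviation "OpE \<equiv> CE scale Delta eps"

lemma OpC_simps[simp]:
  "om_mem OpC = hom_deg" "om_null OpC f = (f \<in> mlrel scale)" "om_add OpC = fadd"
  "om_smult OpC = fsmult" "om_zero OpC = fzero" "om_comp OpC = ocomp mult Delta eps"
  "om_mu OpC = basis [u, u]" "om_e OpC = basis []"
  by (auto simp: OC_def)

lemma OpE_simps[simp]:
  "om_mem OpE = ce_mem scale" "om_null OpE g = (\<forall>c. g c \<in> mlrel scale)"
  "om_add OpE = (\<lambda>f g c. fadd (f c) (g c))" "om_smult OpE = (\<lambda>a f c. fsmult a (f c))"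
  "om_zero OpE = (\<lambda>c. fzero)" "om_comp OpE = cecomp" "om_mu OpE = Delta"
  "om_e OpE = (\<lambda>c. fsmult (eps c) (basis []))"
  by (auto simp: CE_def)

lemma osum_OpC: "osum OpC xs = foldr fadd xs fzero"
  by (simp add: osum_def)

lemma osum_OpE: "osum OpE xs = (\<lambda>c. foldr fadd (map (\<lambda>f. f c) xs) fzero)"
  by (induction xs) (auto simp: osum_def)

text \<open>Y represents ext X up to tensor equality.  The operations of both operads
preserve this relation, which is the statement that ext is a morphism of operads
with multiplication.\<close>
definition ext_image :: "nat \<Rightarrow> ('c,'k) fm \<Rightarrow> ('c \<Rightarrow> ('c,'k) fm) \<Rightarrow> bool" where
  "ext_image N X Y \<longleftrightarrow> fin X \<and> homog N X \<and> (\<forall>c. fin (Y c) \<and> homog N (Y c)) \<and> (\<forall>c. ext N X c \<approx> Y c)"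

lemma ext_image_klinear: "ext_image N X Y \<Longrightarrow> klinear scale Y"
  by (rule klinear_teq_cong[where F="ext N X"]) (auto simp: ext_image_def intro: klinear_ext)

lemma ext_image_ext: "fin X \<Longrightarrow> homog N X \<Longrightarrow> ext_image N X (ext N X)"
  by (simp add: ext_image_def ext_homog)

lemma ext_image_hom: "hom_deg N X \<Longrightarrow> ext_image N X (ext N X)"
  by (simp add: ext_image_ext hom_deg_iff)

lemma ext_image_add: "ext_image N X Y \<Longrightarrow> ext_image N X' Y' \<Longrightarrow> ext_image N (fadd X X') (\<lambda>c. fadd (Y c) (Y' c))"
  by (auto simp: ext_image_def ext_fadd intro: teq_fadd)

lemma ext_image_smult: "ext_image N X Y \<Longrightarrow> ext_image N (fsmult a X) (\<lambda>c. fsmult a (Y c))"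
  by (auto simp: ext_image_def ext_fsmult intro: teq_fsmult)

lemma ext_image_zero: "ext_image N fzero (\<lambda>c. fzero)"
  by (auto simp: ext_image_def)

lemma ext_image_foldr: "(\<And>i. i \<in> set L \<Longrightarrow> ext_image N (F i) (G i)) \<Longrightarrow>
   ext_image N (foldr fadd (map F L) fzero) (\<lambda>c. foldr fadd (map (\<lambda>i. G i c) L) fzero)"
proof (induction L)
  case Nil then show ?case by (simp add: ext_image_zero)
next
  case (Cons a L)
  then show ?case using ext_image_add[of N "F a" "G a"] by simp
qed

lemma ext_image_mu: "ext_image 2 (basis [u, u]) Delta"
  by (auto simp: ext_image_def ext_mu intro: homog_basis)

lemma ext_image_e: "ext_image 0 (basis []) (\<lambda>c. fsmult (eps c) (basis []))"
  by (auto simp: ext_image_def ext_e intro!: homog_basis homog_fsmult)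

lemma ext_image_comp:
  assumes r1: "ext_image m X1 Y1" and r2: "ext_image n X2 Y2" and i: "1 \<le> i" "i \<le> m" and N: "N = m + n - 1"
  shows "ext_image N (ocomp mult Delta eps i X1 X2) (cecomp i Y1 Y2)"
proof -
  have a1: "fin X1" "homog m X1" "\<And>c. fin (Y1 c)" "\<And>c. homog m (Y1 c)" "\<And>c. ext m X1 c \<approx> Y1 c"
    using r1 by (auto simp: ext_image_def)
  have a2: "fin X2" "homog n X2" "\<And>c. fin (Y2 c)" "\<And>c. homog n (Y2 c)" "\<And>c. ext n X2 c \<approx> Y2 c"
    using r2 by (auto simp: ext_image_def)
  define j where "j = i - 1"
  define k where "k = m - i"
  have m: "m = j + 1 + k" and N': "N = j + n + k" and ij: "i = Suc j"
    using i N by (auto simp: j_def k_def)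
  have h: "fin (ocomp mult Delta eps i X1 X2) \<and> homog N (ocomp mult Delta eps i X1 X2)"
    using ocomp_hom[OF a1(1,2) a2(1,2) i] N by simp
  have hc: "fin (cecomp i Y1 Y2 c) \<and> homog N (cecomp i Y1 Y2 c)" for c
    using cecomp_hom[OF a1(3,4) a2(3,4) i] N by simp
  have "ext N (ocomp mult Delta eps i X1 X2) c \<approx> cecomp i Y1 Y2 c" for c
  proof -
    have "ext N (ocomp mult Delta eps i X1 X2) c \<approx> cecomp i (ext m X1) (ext n X2) c"
      using ext_ocomp[of X1 j k X2 n c] a1 a2 unfolding m N' ij by simp
    also have "\<dots> \<approx> cecomp i Y1 (ext n X2) c"
      by (rule cecomp_teq_left[OF a1(5) _ _ _ a1(4) klinear_ext[OF a2(1,2)] i])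
         (use a1 in \<open>auto intro: ext_homog\<close>)
    also have "\<dots> \<approx> cecomp i Y1 Y2 c"
      by (rule cecomp_teq_right[OF a2(5)]) (use a2 i in auto)
    finally show ?thesis .
  qed
  then show ?thesis using h hc by (simp add: ext_image_def)
qed

lemma ext_image_osub: "ext_image N X Y \<Longrightarrow> ext_image N X' Y' \<Longrightarrow> ext_image N (osub OpC X X') (osub OpE Y Y')"
  by (simp add: osub_def ext_image_add ext_image_smult)

lemma ext_image_cdiff:
  assumes "ext_image n X Y"
  shows "ext_image (n + 1) (cdiff OpC n X) (cdiff OpE n Y)"
  unfolding cdiff_def using assms
  by (simp only: OpC_simps OpE_simps osum_OpC osum_OpE map_map o_def)
     (intro ext_image_add ext_image_smult ext_image_foldr ext_image_comp[OF ext_image_mu]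
        ext_image_comp[OF _ ext_image_mu]; auto)

lemma ext_image_cup:
  assumes "ext_image m X Y" "ext_image n X' Y'"
  shows "ext_image (m + n) (cup OpC m X X') (cup OpE m Y Y')"
  unfolding cup_def using assms
  by (simp, intro ext_image_comp[where m="m + 1"] ext_image_comp[OF ext_image_mu]) simp_all

lemma ext_image_obar:
  assumes "ext_image m X Y" "ext_image n X' Y'"
  shows "ext_image (m + n - 1) (obar OpC m n X X') (obar OpE m n Y Y')"
  unfolding obar_def using assms
  by (simp only: OpC_simps OpE_simps osum_OpC osum_OpE map_map o_def)
     (intro ext_image_smult ext_image_foldr ext_image_comp; auto)

lemma ext_image_gbracket:
  assumes "ext_image m X Y" "ext_image n X' Y'"
  shows "ext_image (m + n - 1) (gbracket OpC m n X X') (gbracket OpE m n Y Y')"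
proof -
  have "ext_image (m + n - 1) (obar OpC n m X' X) (obar OpE n m Y' Y)"
    using ext_image_obar[OF assms(2,1)] by (simp add: add.commute)
  then show ?thesis
    unfolding gbracket_def using assms
    by (simp only: OpC_simps OpE_simps) (intro ext_image_osub ext_image_obar ext_image_smult)
qed

lemma ext_image_null: "ext_image N X Y \<Longrightarrow> X \<in> mlrel scale \<Longrightarrow> Y c \<in> mlrel scale"
  unfolding ext_image_def using ext_mlrel teq_mlrel teq_sym by metis

lemma ext_image_mem: "ext_image N X Y \<Longrightarrow> ce_mem scale N Y"
  using ext_image_klinear[of N X Y] by (auto simp: ext_image_def ce_mem_def hom_deg_iff klinear_def)

lemma cohom_CE_of_teq:
  assumes "\<And>c. fin (A c)" "\<And>c. homog N (A c)" "\<And>c. fin (B c)" "\<And>c. homog N (B c)" "\<And>c. A c \<approx> B c"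
  shows "cohom OpE N A B"
proof -
  have eq: "osub OpE A B = (\<lambda>c. fsub (A c) (B c))" by (simp add: osub_def fadd_neg_fsub)
  have z: "fsub (A c) (B c) \<in> mlrel scale" for c using assms(5) by (simp add: teq_def)
  have "ce_mem scale N (\<lambda>c. fsub (A c) (B c))"
    unfolding ce_mem_def hom_deg_iff using assms z
    by (auto intro!: mlrel_teq mlrel.rel_plus mlrel.rel_scale)
  then show ?thesis unfolding cohom_def coboundary_def eq using z by simp
qed

lemma ext_image_cohom: "ext_image N X Y \<Longrightarrow> cohom OpE N (ext N X) Y"
  by (rule cohom_CE_of_teq) (auto simp: ext_image_def ext_homog)

section \<open>Evaluation at the unit\<close>

lemma foldr_teq: "(\<And>i. i \<in> set L \<Longrightarrow> A i \<approx> B i) \<Longrightarrow>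
   foldr fadd (map A L) fzero \<approx> foldr fadd (map B L) fzero"
  by (induction L) (auto intro: teq_fadd)

lemma flin_basis_between:
  fixes g :: "('c,'k) fm"
  assumes "fin g"
  shows "flin g (\<lambda>bs. fmul (fmul (basis T) (basis bs)) (basis Dr)) = fmul (fmul (basis T) g) (basis Dr)"
proof -
  have "fmul (fmul (basis T) g) (basis Dr) = fmul (fmul (basis T) (flin g basis)) (basis Dr)"
    using assms by (simp add: flin_id)
  also have "\<dots> = fmul (flin g (\<lambda>bs. fmul (basis T) (basis bs))) (basis Dr)"
    by (subst fmul_flin_right) (use assms in auto)
  also have "\<dots> = flin g (\<lambda>bs. fmul (fmul (basis T) (basis bs)) (basis Dr))"
    by (subst fmul_flin_left) (use assms in auto)
  finally show ?thesis by simp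
qed

lemma eval_unit_Delta_cecomp:
  assumes G: "ce_mem scale N G" and j: "j \<le> 1"
  shows "cecomp (Suc j) Delta G u \<approx> ocomp mult Delta eps (Suc j) (basis [u, u]) (G u)"
proof -
  have lin: "klinear scale G" using G by (simp add: ce_mem_def klinear_def hom_deg_iff)
  have gh: "fin (G z)" "homog N (G z)" for z using G by (auto simp: ce_mem_def hom_deg_iff)
  have e: "j + 1 + (1 - j) = 2" using j by simp
  have "cecomp (Suc j) Delta G u = flin (Delta u) (apply_at j G)" by (simp add: cecomp_alt)
  also have "\<dots> \<approx> flin (basis [u, u]) (apply_at j G)"
    by (rule teq_flin_left[OF Delta_u _ _ _ _ multilinear_apply_at[OF lin, of j "1 - j", unfolded e]])
       (auto intro: homog_basis)
  also have "\<dots> = fmul (fmul (basis (take j [u, u])) (G u)) (basis (drop (Suc j) [u, u]))"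
    using j by (auto simp: le_Suc_eq)
  also have "\<dots> = flin (G u) (\<lambda>bs. fmul (fmul (basis (take j [u, u])) (basis bs)) (basis (drop (Suc j) [u, u])))"
    by (rule flin_basis_between[symmetric]) (simp add: gh)
  also have "\<dots> \<approx> flin (G u) (\<lambda>bs. apply_at j (\<lambda>a. fzip mult (D (length bs) a) (basis bs)) [u, u])"
  proof (rule teq_flin_right)
    fix bs assume "G u bs \<noteq> 0"
    then have l: "length bs = N" using gh by (auto simp: homog_def)
    have uj: "[u, u] ! j = u" using j by (auto simp: le_Suc_eq)
    have b: "basis bs \<approx> ext N (basis bs) u" by (rule teq_sym[OF ext_eval_unit]) (auto intro: homog_basis l)
    have eq: "apply_at j (\<lambda>a. fzip mult (D (length bs) a) (basis bs)) [u, u] =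
       fmul (fmul (basis (take j [u, u])) (ext N (basis bs) u)) (basis (drop (Suc j) [u, u]))"
      by (simp only: uj l ext_eq)
    show "fmul (fmul (basis (take j [u, u])) (basis bs)) (basis (drop (Suc j) [u, u])) \<approx>
        apply_at j (\<lambda>a. fzip mult (D (length bs) a) (basis bs)) [u, u]"
      unfolding eq by (intro teq_fmul teq_refl b) auto
  qed
  also have "\<dots> = ocomp mult Delta eps (Suc j) (basis [u, u]) (G u)"
    by (simp add: ocomp_alt)
  finally show ?thesis .
qed

lemma eval_unit_cecomp_Delta:
  assumes "1 \<le> i"
  shows "cecomp i G Delta u = ocomp mult Delta eps i (G u) (basis [u, u])"
proof -
  have "fzip mult (D 2 a) (basis [u, u]) = Delta a" for a using ext_mu[of a] by (simp add: ext_eq)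
  then show ?thesis using assms by (simp add: ocomp_alt cecomp_alt numeral_2_eq_2)
qed

lemma cdiff_eval_unit:
  assumes G: "ce_mem scale N G"
  shows "cdiff OpE N G u \<approx> cdiff OpC N (G u)"
proof -
  have "cecomp 2 Delta G u \<approx> ocomp mult Delta eps 2 (basis [u, u]) (G u)"
    using eval_unit_Delta_cecomp[OF G, of 1] by (simp add: numeral_2_eq_2)
  moreover have "cecomp 1 Delta G u \<approx> ocomp mult Delta eps 1 (basis [u, u]) (G u)"
    using eval_unit_Delta_cecomp[OF G, of 0] by simp
  ultimately show ?thesis unfolding cdiff_def
    by (simp only: OpC_simps OpE_simps osum_OpC osum_OpE map_map o_def)
       (intro teq_fadd teq_fsmult foldr_teq; auto simp: eval_unit_cecomp_Delta)
qed

lemma ext_cocycle: "cocycle OpC n x \<Longrightarrow> cocycle OpE n (ext n x)"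
proof -
  assume c: "cocycle OpC n x"
  then have h: "hom_deg n x" and z: "cdiff OpC n x \<in> mlrel scale" by (auto simp: cocycle_def)
  have r: "ext_image n x (ext n x)" using ext_image_hom[OF h] .
  have "ext_image (n + 1) (cdiff OpC n x) (cdiff OpE n (ext n x))" by (rule ext_image_cdiff[OF r])
  then have "\<forall>c. cdiff OpE n (ext n x) c \<in> mlrel scale" using z ext_image_null by blast
  then show ?thesis using ext_image_mem[OF r] by (simp add: cocycle_def)
qed

lemma coboundary_ext_image:
  assumes r: "ext_image n X Y" and cb: "coboundary OpC n X"
  shows "coboundary OpE n Y"
proof -
  have mem: "ce_mem scale n Y" by (rule ext_image_mem[OF r])
  from cb consider "X \<in> mlrel scale"
    | g where "1 \<le> n" "hom_deg (n - 1) g" "osub OpC X (cdiff OpC (n - 1) g) \<in> mlrel scale"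
    by (auto simp: coboundary_def)
  then show ?thesis
  proof cases
    case 1
    then show ?thesis using mem ext_image_null[OF r] by (simp add: coboundary_def)
  next
    case (2 g)
    have rg: "ext_image (n - 1) g (ext (n - 1) g)" by (rule ext_image_hom[OF 2(2)])
    have "ext_image (n - 1 + 1) (cdiff OpC (n - 1) g) (cdiff OpE (n - 1) (ext (n - 1) g))"
      by (rule ext_image_cdiff[OF rg])
    with 2(1) have "ext_image n (osub OpC X (cdiff OpC (n - 1) g)) (osub OpE Y (cdiff OpE (n - 1) (ext (n - 1) g)))"
      by (intro ext_image_osub[OF r]) simp
    then have "\<forall>c. osub OpE Y (cdiff OpE (n - 1) (ext (n - 1) g)) c \<in> mlrel scale"
      using 2(3) ext_image_null by blast
    then show ?thesis using mem 2(1) ext_image_mem[OF rg] by (auto simp: coboundary_def)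
  qed
qed

text \<open>Evaluation at the unit is a chain map from CoEnd(C) to O_C (cdiff_eval_unit),
so it carries coboundaries to coboundaries.\<close>
lemma coboundary_eval_unit:
  assumes X: "hom_deg n X" and YX: "Y u \<approx> X" and cb: "coboundary OpE n Y"
  shows "coboundary OpC n X"
proof -
  from cb consider "\<forall>c. Y c \<in> mlrel scale"
    | G where "1 \<le> n" "ce_mem scale (n - 1) G" "\<forall>c. osub OpE Y (cdiff OpE (n - 1) G) c \<in> mlrel scale"
    by (auto simp: coboundary_def)
  then show ?thesis
  proof cases
    case 1
    then have "X \<in> mlrel scale" using YX teq_mlrel teq_sym by metis
    then show ?thesis using X by (simp add: coboundary_def)
  next
    case (2 G)
    have "osub OpE Y (cdiff OpE (n - 1) G) u = fadd (Y u) (fsmult (-1) (cdiff OpE (n - 1) G u))"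
      by (simp add: osub_def)
    also have "\<dots> \<approx> fadd X (fsmult (-1) (cdiff OpC (n - 1) (G u)))"
      by (intro teq_fadd teq_fsmult YX cdiff_eval_unit[OF 2(2)])
    also have "\<dots> = osub OpC X (cdiff OpC (n - 1) (G u))"
      by (simp add: osub_def)
    finally have "osub OpC X (cdiff OpC (n - 1) (G u)) \<in> mlrel scale"
      using 2(3) teq_mlrel teq_sym by metis
    moreover have "hom_deg (n - 1) (G u)" using 2(2) by (simp add: ce_mem_def)
    ultimately show ?thesis using X 2(1) by (auto simp: coboundary_def)
  qed
qed

lemma ext_cohom_iff:
  assumes "cocycle OpC n x" "cocycle OpC n y"
  shows "cohom OpC n x y \<longleftrightarrow> cohom OpE n (ext n x) (ext n y)"
proof
  have r: "ext_image n (osub OpC x y) (osub OpE (ext n x) (ext n y))"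
    using assms by (intro ext_image_osub ext_image_hom) (auto simp: cocycle_def)
  then show "cohom OpC n x y \<Longrightarrow> cohom OpE n (ext n x) (ext n y)"
    unfolding cohom_def by (rule coboundary_ext_image)
  have h: "hom_deg n (osub OpC x y)" using r by (simp add: ext_image_def hom_deg_iff)
  have "osub OpE (ext n x) (ext n y) u \<approx> ext n (osub OpC x y) u"
    using r by (simp add: ext_image_def teq_sym)
  also have "\<dots> \<approx> osub OpC x y" using h by (intro ext_eval_unit) (auto simp: hom_deg_iff)
  finally show "cohom OpE n (ext n x) (ext n y) \<Longrightarrow> cohom OpC n x y"
    unfolding cohom_def by (rule coboundary_eval_unit[OF h])
qed

lemma ext_image_of_cocycle: "cocycle OpC n x \<Longrightarrow> ext_image n x (ext n x)"
  by (simp add: cocycle_def ext_image_hom)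

lemma ext_cohom_add:
  "cocycle OpC n x \<Longrightarrow> cocycle OpC n y \<Longrightarrow>
   cohom OpE n (ext n (om_add OpC x y)) (om_add OpE (ext n x) (ext n y))"
  using ext_image_add[OF ext_image_of_cocycle ext_image_of_cocycle] by (simp add: ext_image_cohom)

lemma ext_cohom_smult:
  "cocycle OpC n x \<Longrightarrow> cohom OpE n (ext n (om_smult OpC a x)) (om_smult OpE a (ext n x))"
  using ext_image_smult[OF ext_image_of_cocycle] by (simp add: ext_image_cohom)

lemma ext_cohom_e: "cohom OpE 0 (ext 0 (om_e OpC)) (om_e OpE)"
  using ext_image_cohom[OF ext_image_e] by simp

lemma ext_cohom_cup:
  "cocycle OpC m x \<Longrightarrow> cocycle OpC n y \<Longrightarrow>
   cohom OpE (m + n) (ext (m + n) (cup OpC m x y)) (cup OpE m (ext m x) (ext n y))"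
  by (intro ext_image_cohom ext_image_cup ext_image_of_cocycle)

lemma ext_cohom_gbracket:
  "cocycle OpC m x \<Longrightarrow> cocycle OpC n y \<Longrightarrow>
   cohom OpE (m + n - 1) (ext (m + n - 1) (gbracket OpC m n x y)) (gbracket OpE m n (ext m x) (ext n y))"
  by (intro ext_image_cohom ext_image_gbracket ext_image_of_cocycle)

end

theorem theorem4p1:
  fixes scale :: "'k::comm_ring_1 \<Rightarrow> 'c::ab_group_add \<Rightarrow> 'c"
    and mult :: "'c \<Rightarrow> 'c \<Rightarrow> 'c" and u :: 'c
    and Delta :: "'c \<Rightarrow> ('c, 'k) fm" and eps :: "'c \<Rightarrow> 'k"
  assumes bialg: "bialgebra scale mult u Delta eps"
  defines "OpC \<equiv> OC scale mult u Delta eps"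
    and "OpE \<equiv> CE scale Delta eps"
    and "ext \<equiv> extmap mult Delta eps"
  shows
    "(\<forall>n x. cocycle OpC n x \<longrightarrow> cocycle OpE n (ext n x))
   \<and> (\<forall>n x y. cocycle OpC n x \<longrightarrow> cocycle OpC n y \<longrightarrow>
        (cohom OpC n x y \<longleftrightarrow> cohom OpE n (ext n x) (ext n y)))
   \<and> (\<forall>n x y. cocycle OpC n x \<longrightarrow> cocycle OpC n y \<longrightarrow>
        cohom OpE n (ext n (om_add OpC x y)) (om_add OpE (ext n x) (ext n y)))
   \<and> (\<forall>n a x. cocycle OpC n x \<longrightarrow>
        cohom OpE n (ext n (om_smult OpC a x)) (om_smult OpE a (ext n x)))
   \<and> cohom OpE 0 (ext 0 (om_e OpC)) (om_e OpE)
   \<and> (\<forall>m n x y. cocycle OpC m x \<longrightarrow> cocycle OpC n y \<longrightarrow>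
        cohom OpE (m + n) (ext (m + n) (cup OpC m x y)) (cup OpE m (ext m x) (ext n y)))
   \<and> (\<forall>m n x y. cocycle OpC m x \<longrightarrow> cocycle OpC n y \<longrightarrow>
        cohom OpE (m + n - 1) (ext (m + n - 1) (gbracket OpC m n x y))
                            (gbracket OpE m n (ext m x) (ext n y)))"
proof -
  interpret bialgebra_struct scale mult u Delta eps by (rule bialgebra_struct.intro[OF bialg])
  show ?thesis unfolding OpC_def OpE_def ext_def
    using ext_cocycle ext_cohom_iff ext_cohom_add ext_cohom_smult ext_cohom_e ext_cohom_cup ext_cohom_gbracket
    by blast
qed

end
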